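(* A pair of matrices $(G,H)\in W_n$ belongs to $\Psi(\mathbb{E}^n)$ if and only if (1) $G$ is degenerate positive semidefinite, and all principal minors of $G$ of sizes $2\times2,3\times3,\dots,(n-1)\times(n-1)$ are strictly positive; and (2) no row of $H$ is a linear combination of rows of $G$. A butterfly in $\mathbb{E}^n$ is determined by a pair $(G,H)\in\Psi(\mathbb{E}^n)$ uniquely up to similarity.
   Context: $W_n$ is the space of pairs $(G,H)$ of real $n\times n$ matrices with $G$ symmetric and $g_{pp}=h_{pp}=1$ for all $p$. A butterfly in Euclidean space $\mathbb{E}^n$ consists of non-degenerate $(n-1)$-simplices $\Delta=[\mathbf{a}_1\dots\mathbf{a}_n]$ and $\Delta_p$ (spanned by $\mathbf{b}_p$ and $\mathbf{a}_q$, $q\ne p$), $p=1,\dots,n$, where $\Delta_p$ is attached to $\Delta$ along the face $F_p$ of $\Delta$ opposite $\mathbf{a}_p$. Let $\mathbf{m}$ be a unit normal to the hyperplane of $\Delta$, $\mathbf{n}_p$ the unit inner normal of $\Delta$ at its facet $F_p$ (in the hyperplane of $\Delta$), $\alpha_p$ the length of the altitude of $\Delta$ from $\mathbf{a}_p$, $\beta_p$ the length of the altitude of $\Delta_p$ from $\mathbf{b}_p$, and $\mathbf{b}_p^0$ the position of $\mathbf{b}_p$ after rotating $\Delta_p$ about $F_p$ into the hyperplane of $\Delta$ on the same side of $F_p$ as $\mathbf{a}_p$. The pair $(G,H)$ of the butterfly: $G$ is the Gram matrix of $\mathbf{n}_1,\dots,\mathbf{n}_n$, and $h_{pq}=\beta_p^{-1}(\mathbf{b}_p^0-\mathbf{a}_r,\mathbf{n}_q)$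 for any $r\ne q$. Elementary reversions act on $(G,H)$ as follows: the $a_p$-reversion replaces, for all $q\ne p$, $g_{pq}=g_{qp}$ by $-g_{pq}$, $h_{pq}$ by $h_{pq}-2g_{pq}$, $h_{qp}$ by $-h_{qp}$; the $b_p$-reversion replaces $h_{pq}$ by $2g_{pq}-h_{pq}$ for all $q\ne p$; all other entries are unchanged. $\Psi(\mathbb{E}^n)\subset W_n$ is the set of all pairs obtained by compositions of elementary reversions from pairs of butterflies in $\mathbb{E}^n$. *)

theory Defs
  imports "HOL-Analysis.Analysis"
begin

(* Points of E^n are vectors of type real^'n; the index set {1..n} of vertices is the
   same finite type 'n (so n = CARD('n)).  A butterfly is given by the vertex maps
   a, b :: 'n => real^'n; the simplex Delta_p has vertex map  a(p := b p). *)

definition nondeg_simplex :: "('n::finite \<Rightarrow> real^'n) \<Rightarrow> bool" where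
  "nondeg_simplex v \<longleftrightarrow> inj v \<and> \<not> affine_dependent (range v)"

definition butterfly :: "('n::finite \<Rightarrow> real^'n) \<Rightarrow> ('n \<Rightarrow> real^'n) \<Rightarrow> bool" where
  "butterfly a b \<longleftrightarrow> nondeg_simplex a \<and> (\<forall>p. nondeg_simplex (a(p := b p)))"

definition facet_hull :: "('n::finite \<Rightarrow> real^'n) \<Rightarrow> 'n \<Rightarrow> (real^'n) set" where
  "facet_hull a p = affine hull (a ` (UNIV - {p}))"

definition foot :: "('n::finite \<Rightarrow> real^'n) \<Rightarrow> 'n \<Rightarrow> real^'n \<Rightarrow> real^'n" where
  "foot a p x = closest_point (facet_hull a p) x"

(* unit inner normal n_p of Delta at F_p (lies in the hyperplane of Delta) *)
definition inner_normal :: "('n::finite \<Rightarrow> real^'n) \<Rightarrow> 'n \<Rightarrow> real^'n" where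
  "inner_normal a p = sgn (a p - foot a p (a p))"

definition beta :: "('n::finite \<Rightarrow> real^'n) \<Rightarrow> ('n \<Rightarrow> real^'n) \<Rightarrow> 'n \<Rightarrow> real" where
  "beta a b p = dist (b p) (foot a p (b p))"

(* b_p^0: b_p rotated about F_p into the hyperplane of Delta, on the side of a_p *)
definition b_rot :: "('n::finite \<Rightarrow> real^'n) \<Rightarrow> ('n \<Rightarrow> real^'n) \<Rightarrow> 'n \<Rightarrow> real^'n" where
  "b_rot a b p = foot a p (b p) + beta a b p *\<^sub>R inner_normal a p"

definition gram_of :: "('n::finite \<Rightarrow> real^'n) \<Rightarrow> real^'n^'n" where
  "gram_of a = (\<chi> p q. inner_normal a p \<bullet> inner_normal a q)"

definition hmat_of :: "('n::finite \<Rightarrow> real^'n) \<Rightarrow> ('n \<Rightarrow> real^'n) \<Rightarrow> real^'n^'n" where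
  "hmat_of a b = (\<chi> p q. ((b_rot a b p - a (SOME r. r \<noteq> q)) \<bullet> inner_normal a q) / beta a b p)"

definition pair_of :: "('n::finite \<Rightarrow> real^'n) \<Rightarrow> ('n \<Rightarrow> real^'n) \<Rightarrow> (real^'n^'n) \<times> (real^'n^'n)" where
  "pair_of a b = (gram_of a, hmat_of a b)"

definition inW :: "real^'n^'n \<Rightarrow> real^'n^'n \<Rightarrow> bool" where
  "inW G H \<longleftrightarrow> transpose G = G \<and> (\<forall>p. G $ p $ p = 1 \<and> H $ p $ p = 1)"

definition a_rev :: "'n::finite \<Rightarrow> (real^'n^'n) \<times> (real^'n^'n) \<Rightarrow> (real^'n^'n) \<times> (real^'n^'n)" where
  "a_rev p GH = (case GH of (G, H) \<Rightarrow>
     ((\<chi> i j. if (i = p \<and> j \<noteq> p) \<or> (j = p \<and> i \<noteq> p) then - G $ i $ j else G $ i $ j),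
      (\<chi> i j. if i = p \<and> j \<noteq> p then H $ i $ j - 2 * G $ i $ j
              else if j = p \<and> i \<noteq> p then - H $ i $ j else H $ i $ j)))"

definition b_rev :: "'n::finite \<Rightarrow> (real^'n^'n) \<times> (real^'n^'n) \<Rightarrow> (real^'n^'n) \<times> (real^'n^'n)" where
  "b_rev p GH = (case GH of (G, H) \<Rightarrow>
     (G, (\<chi> i j. if i = p \<and> j \<noteq> p then 2 * G $ i $ j - H $ i $ j else H $ i $ j)))"

inductive_set Psi :: "((real^'n::finite^'n) \<times> (real^'n^'n)) set" where
  butterfly_pair: "butterfly a b \<Longrightarrow> pair_of a b \<in> Psi"
| a_reversion: "x \<in> Psi \<Longrightarrow> a_rev p x \<in> Psi"
| b_reversion: "x \<in> Psi \<Longrightarrow> b_rev p x \<in> Psi"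

definition principal_minor :: "real^'n::finite^'n \<Rightarrow> 'n set \<Rightarrow> real" where
  "principal_minor G S = (\<Sum>\<sigma> \<in> {\<sigma>. \<sigma> permutes S}. of_int (sign \<sigma>) * (\<Prod>i\<in>S. G $ i $ \<sigma> i))"

definition degenerate_psd :: "real^'n::finite^'n \<Rightarrow> bool" where
  "degenerate_psd G \<longleftrightarrow> det G = 0 \<and> (\<forall>x. 0 \<le> x \<bullet> (G *v x))"

(* butterflies similar: all constituent simplices similar with one common ratio,
   glued in the same way (intrinsic similarity; the wings may hinge about F_p) *)
definition butterfly_similar ::
  "('n::finite \<Rightarrow> real^'n) \<Rightarrow> ('n \<Rightarrow> real^'n) \<Rightarrow> ('n \<Rightarrow> real^'n) \<Rightarrow> ('n \<Rightarrow> real^'n) \<Rightarrow> bool" where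
  "butterfly_similar a b a' b' \<longleftrightarrow> (\<exists>c>0.
      (\<forall>i j. dist (a' i) (a' j) = c * dist (a i) (a j)) \<and>
      (\<forall>p q. q \<noteq> p \<longrightarrow> dist (b' p) (a' q) = c * dist (b p) (a q)))"

end

theory Submission
  imports Defs
begin

text \<open>The vectors \<open>u\<^sub>q = n\<^sub>q / \<alpha>\<^sub>q\<close> are the gradients of the barycentric coordinates of \<open>\<Delta>\<close>;
  they sum to zero, so the Gram matrix \<open>G\<close> of the normals is positive semidefinite with kernel
  spanned by \<open>w = (1/\<alpha>\<^sub>q)\<close>, and \<open>row p H \<bullet> w = 1/\<beta>\<^sub>p\<close>. Reversions preserve this up to signs: an
  \<open>a\<^sub>p\<close>-reversion negates \<open>w\<^sub>p\<close>, a \<open>b\<^sub>p\<close>-reversion negates \<open>row p H \<bullet> w\<close>. So every pair of \<open>\<Psi>\<close>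
  has a psd \<open>G\<close> whose kernel is spanned by a nowhere vanishing \<open>w\<close> with no row of \<open>H\<close> orthogonal
  to \<open>w\<close>, which is equivalent to the stated conditions (positive principal minors mean positive
  definiteness off every coordinate hyperplane). Conversely, reversions make all these signs
  positive; then a Gram factorisation \<open>G = (n\<^sub>i \<bullet> n\<^sub>j)\<close> yields a simplex with scaled normals
  \<open>w\<^sub>q n\<^sub>q\<close>, and wings in its hyperplane with barycentric coordinates proportional to
  \<open>H\<^sub>p\<^sub>q w\<^sub>q\<close> realise \<open>H\<close>. For uniqueness, \<open>G\<close> fixes the altitudes up to a common factor, and
  then the pairings with the scaled normals fix all edge lengths.\<close>

section \<open>Linear algebra\<close>

lemma in_span_imageE:
  fixes f :: "'i \<Rightarrow> 'a::real_vector"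
  assumes "z \<in> span (f ` S)" "finite S"
  obtains c where "z = (\<Sum>j\<in>S. c j *\<^sub>R f j)"
proof -
  from assms(1) have "\<exists>c. z = (\<Sum>j\<in>S. c j *\<^sub>R f j)"
  proof (induction rule: span_induct_alt)
    case base
    show ?case by (rule exI[of _ "\<lambda>_. 0"]) simp
  next
    case (step c x y)
    then obtain d k where d: "y = (\<Sum>j\<in>S. d j *\<^sub>R f j)" and k: "x = f k" "k \<in> S" by blast
    have "c *\<^sub>R x + y = (\<Sum>j\<in>S. (d j + (if j = k then c else 0)) *\<^sub>R f j)"
      using k assms(2)
      by (simp add: d scaleR_add_left sum.distrib if_distrib[of "\<lambda>t. t *\<^sub>R _"] cong: if_cong)
    then show ?case by (intro exI[where x="\<lambda>j. d j + (if j = k then c else 0)"])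
  qed
  then show thesis using that by blast
qed

lemma in_span_orthogonal_eq_0:
  fixes z :: "'a::real_inner"
  assumes "z \<in> span X" "\<And>x. x \<in> X \<Longrightarrow> z \<bullet> x = 0"
  shows "z = 0"
  using orthogonal_to_span[OF assms(1), of z] assms(2) by (simp add: orthogonal_def)

lemma det_eq_0_iff_kernel:
  fixes A :: "real^'n::finite^'n"
  shows "det A = 0 \<longleftrightarrow> (\<exists>x. x \<noteq> 0 \<and> A *v x = 0)"
  using det_eq_0_rank[of A] matrix_nonfull_linear_equations_eq[of A] rank_bound[of A]
  by auto

lemma symmetric_matrix_entry: "transpose G = G \<Longrightarrow> G $ i $ j = G $ j $ i"
  by (metis transpose_def vec_lambda_beta)

lemma symmetric_matrix_inner_commute:
  fixes G :: "real^'n::finite^'n"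
  assumes "transpose G = G"
  shows "y \<bullet> (G *v x) = x \<bullet> (G *v y)"
proof -
  have "y \<bullet> (G *v x) = (y v* G) \<bullet> x" by (simp add: dot_lmul_matrix)
  also have "y v* G = G *v y" using vector_transpose_matrix[of y G] assms by simp
  finally show ?thesis by (simp add: inner_commute)
qed

lemma matrix_vector_mult_component: "(A *v x) $ i = (\<Sum>j\<in>UNIV. A $ i $ j * x $ j)"
  by (simp add: matrix_vector_mult_def)

lemma inner_row: "row i A \<bullet> x = (\<Sum>j\<in>UNIV. A $ i $ j * x $ j)"
  by (simp add: inner_vec_def row_def inner_real_def)

lemma matrix_vector_mult_supported:
  assumes "\<And>i. i \<notin> S \<Longrightarrow> x $ i = 0"
  shows "(G *v x) $ k = (\<Sum>i\<in>S. G $ k $ i * x $ i)"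
  unfolding matrix_vector_mult_def using assms
  by (simp, intro sum.mono_neutral_right) auto

lemma gram_quadratic_form_supported:
  fixes G :: "real^'n::finite^'n" and N :: "'n \<Rightarrow> 'a::real_inner"
  assumes "\<And>i. i \<notin> S \<Longrightarrow> x $ i = 0"
    and gram: "\<And>i j. i \<in> S \<Longrightarrow> j \<in> S \<Longrightarrow> G $ i $ j = N i \<bullet> N j"
  shows "x \<bullet> (G *v x) = (\<Sum>i\<in>S. x $ i *\<^sub>R N i) \<bullet> (\<Sum>i\<in>S. x $ i *\<^sub>R N i)"
proof -
  have "x \<bullet> (G *v x) = (\<Sum>i\<in>S. x $ i * (G *v x) $ i)"
    unfolding inner_vec_def inner_real_def using assms(1)
    by (intro sum.mono_neutral_right) auto
  also have "\<dots> = (\<Sum>i\<in>S. x $ i * (\<Sum>j\<in>S. (N i \<bullet> N j) * x $ j))"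
    using gram by (auto simp: matrix_vector_mult_supported[OF assms(1)] intro!: sum.cong)
  also have "\<dots> = (\<Sum>i\<in>S. x $ i *\<^sub>R N i) \<bullet> (\<Sum>i\<in>S. x $ i *\<^sub>R N i)"
    by (simp add: inner_sum_left inner_sum_right sum_distrib_left mult_ac)
       (auto intro!: sum.cong simp: inner_commute)
  finally show ?thesis .
qed

lemma gram_quadratic_form:
  fixes G :: "real^'n::finite^'n" and N :: "'n \<Rightarrow> 'a::real_inner"
  assumes "\<And>i j. G $ i $ j = N i \<bullet> N j"
  shows "x \<bullet> (G *v x) = (\<Sum>i\<in>UNIV. x $ i *\<^sub>R N i) \<bullet> (\<Sum>i\<in>UNIV. x $ i *\<^sub>R N i)"
  using gram_quadratic_form_supported[of UNIV x G N] assms by simp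

lemma gram_matrix_vector_mult:
  fixes G :: "real^'n::finite^'n" and N :: "'n \<Rightarrow> 'a::real_inner"
  assumes "\<And>i j. G $ i $ j = N i \<bullet> N j"
  shows "(G *v x) $ i = N i \<bullet> (\<Sum>j\<in>UNIV. x $ j *\<^sub>R N j)"
  by (simp add: matrix_vector_mult_def assms inner_sum_right mult.commute)

lemma nonneg_quadratic_linear_coeff_eq_0:
  fixes A B :: real
  assumes "\<And>t. 0 \<le> 2 * t * A + t\<^sup>2 * B"
  shows "A = 0"
proof (rule ccontr)
  assume "A \<noteq> 0"
  define d where "d = \<bar>B\<bar> + 1"
  define t where "t = - A / d"
  have "d > 0" by (simp add: d_def add_pos_nonneg)
  have "t\<^sup>2 * B \<le> t\<^sup>2 * d" by (intro mult_left_mono) (auto simp: d_def)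
  also have "t\<^sup>2 * d = - t * A"
    using \<open>d > 0\<close> by (simp add: t_def power2_eq_square field_simps)
  finally have "2 * t * A + t\<^sup>2 * B \<le> t * A" by linarith
  moreover have "0 < A * A" using \<open>A \<noteq> 0\<close> by (metis not_real_square_gt_zero)
  then have "t * A < 0" using \<open>d > 0\<close> by (simp add: t_def)
  ultimately show False using assms[of t] by linarith
qed

lemma psd_isotropic_imp_kernel:
  fixes G :: "real^'n::finite^'n"
  assumes sym: "transpose G = G" and psd: "\<And>y. 0 \<le> y \<bullet> (G *v y)" and "x \<bullet> (G *v x) = 0"
  shows "G *v x = 0"
proof -
  let ?y = "G *v x"
  have "0 \<le> 2 * t * (?y \<bullet> ?y) + t\<^sup>2 * (?y \<bullet> (G *v ?y))" for t
  proof -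
    have "0 \<le> (x + t *\<^sub>R ?y) \<bullet> (G *v (x + t *\<^sub>R ?y))" by (rule psd)
    also have "\<dots> = 2 * t * (?y \<bullet> ?y) + t\<^sup>2 * (?y \<bullet> (G *v ?y))"
      using assms(3) symmetric_matrix_inner_commute[OF sym, of ?y x]
      by (simp add: matrix_vector_right_distrib inner_add_left inner_add_right
          matrix_vector_mult_scaleR power2_eq_square algebra_simps)
    finally show ?thesis .
  qed
  then have "?y \<bullet> ?y = 0" by (rule nonneg_quadratic_linear_coeff_eq_0)
  then show ?thesis by simp
qed

lemma inner_system_solvable:
  fixes N :: "'i::finite \<Rightarrow> 'a::euclidean_space"
  assumes "\<And>c. (\<Sum>i\<in>S. c i *\<^sub>R N i) = 0 \<Longrightarrow> (\<Sum>i\<in>S. c i * g i) = 0"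
  shows "\<exists>x\<in>span (N ` S). \<forall>i\<in>S. N i \<bullet> x = g i"
proof -
  define L where "L x = (\<chi> i. if i \<in> S then N i \<bullet> x else 0)" for x
  define g' :: "real^'i" where "g' = (\<chi> i. if i \<in> S then g i else 0)"
  have "linear L" unfolding L_def by (rule linearI) (auto simp: vec_eq_iff inner_add_right)
  then have span_L: "span (range L) = range L" using span_linear_image[of L UNIV] by simp
  obtain y z where y: "y \<in> span (range L)" and z: "\<And>v. v \<in> span (range L) \<Longrightarrow> orthogonal z v"
    and g': "g' = y + z"
    using orthogonal_subspace_decomp_exists[of "range L" g'] by metis
  obtain x0 where x0: "y = L x0" using y span_L by blast
  have zL: "z \<bullet> L x = (\<Sum>i\<in>S. z $ i *\<^sub>R N i) \<bullet> x" for x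
    by (simp add: L_def inner_vec_def inner_sum_left if_distrib[of "(*) _"] sum.If_cases)
  have "z \<bullet> L x = 0" for x using z[of "L x"] by (simp add: span_base orthogonal_def)
  then have "(\<Sum>i\<in>S. z $ i *\<^sub>R N i) = 0" using zL by (metis inner_eq_zero_iff)
  then have "z \<bullet> g' = 0"
    using assms[of "\<lambda>i. z $ i"]
    by (simp add: g'_def inner_vec_def if_distrib[of "(*) _"] sum.If_cases mult.commute)
  moreover have "z \<bullet> y = 0" using \<open>z \<bullet> L x0 = 0\<close> x0 by simp
  ultimately have "z = 0" using g' by (simp add: inner_add_right)
  then have g'_L: "g' = L x0" using g' x0 by simp
  obtain x x2 where x: "x \<in> span (N ` S)" and x2: "\<And>v. v \<in> span (N ` S) \<Longrightarrow> orthogonal x2 v"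
    and "x0 = x + x2"
    using orthogonal_subspace_decomp_exists[of "N ` S" x0] by metis
  have "N i \<bullet> x = g i" if "i \<in> S" for i
  proof -
    have "x2 \<bullet> N i = 0" using x2[of "N i"] that by (simp add: span_base orthogonal_def)
    then have "N i \<bullet> x = L x0 $ i"
      using that \<open>x0 = x + x2\<close> by (simp add: L_def inner_add_right inner_commute)
    also have "\<dots> = g i" using that by (simp add: g'_L[symmetric] g'_def)
    finally show ?thesis .
  qed
  with x show ?thesis by blast
qed

lemma psd_gram_extension_bound:
  fixes G :: "real^'n::finite^'n" and N :: "'n \<Rightarrow> 'a::real_inner"
  assumes sym: "transpose G = G" and psd: "\<And>x. 0 \<le> x \<bullet> (G *v x)"
    and gram: "\<And>i j. i \<in> S \<Longrightarrow> j \<in> S \<Longrightarrow> G $ i $ j = N i \<bullet> N j" and "k \<notin> S"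
    and p: "p \<in> span (N ` S)" and pN: "\<And>i. i \<in> S \<Longrightarrow> N i \<bullet> p = G $ k $ i"
  shows "p \<bullet> p \<le> G $ k $ k"
proof -
  obtain d where d: "p = (\<Sum>i\<in>S. d i *\<^sub>R N i)" using in_span_imageE[OF p finite] .
  define y :: "real^'n" where "y = (\<chi> i. if i \<in> S then - d i else 0)"
  define e :: "real^'n" where "e = axis k 1"
  have supp: "\<And>i. i \<notin> S \<Longrightarrow> y $ i = 0" by (simp add: y_def)
  have "y \<bullet> (G *v y) = p \<bullet> p"
    using gram_quadratic_form_supported[OF supp gram] by (simp add: y_def d sum_negf)
  moreover have "y \<bullet> (G *v e) = - (p \<bullet> p)"
  proof -
    have "y \<bullet> (G *v e) = (G *v y) $ k"
      using symmetric_matrix_inner_commute[OF sym, of y e] by (simp add: e_def inner_axis')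
    also have "\<dots> = - (\<Sum>i\<in>S. d i * G $ k $ i)"
      by (simp add: matrix_vector_mult_supported[OF supp]) (simp add: y_def sum_negf mult.commute)
    also have "\<dots> = - (\<Sum>i\<in>S. d i * (N i \<bullet> p))" by (simp add: pN)
    finally show ?thesis by (simp add: d inner_sum_left)
  qed
  moreover have "e \<bullet> (G *v e) = G $ k $ k"
    by (simp add: e_def inner_axis' matrix_vector_mult_basis column_def)
  moreover have "0 \<le> (y + e) \<bullet> (G *v (y + e))" by (rule psd)
  ultimately show ?thesis
    using symmetric_matrix_inner_commute[OF sym, of e y]
    by (simp add: matrix_vector_right_distrib inner_add_left inner_add_right)
qed

lemma psd_gram_row_in_span:
  fixes G :: "real^'n::finite^'n" and N :: "'n \<Rightarrow> 'a::euclidean_space"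
  assumes sym: "transpose G = G" and psd: "\<And>x. 0 \<le> x \<bullet> (G *v x)"
    and gram: "\<And>i j. i \<in> S \<Longrightarrow> j \<in> S \<Longrightarrow> G $ i $ j = N i \<bullet> N j"
  obtains p where "p \<in> span (N ` S)" "\<And>i. i \<in> S \<Longrightarrow> N i \<bullet> p = G $ k $ i"
proof -
  have "\<exists>p\<in>span (N ` S). \<forall>i\<in>S. N i \<bullet> p = G $ k $ i"
  proof (rule inner_system_solvable)
    fix c assume c: "(\<Sum>i\<in>S. c i *\<^sub>R N i) = 0"
    define x :: "real^'n" where "x = (\<chi> i. if i \<in> S then c i else 0)"
    have supp: "\<And>i. i \<notin> S \<Longrightarrow> x $ i = 0" by (simp add: x_def)
    have "x \<bullet> (G *v x) = 0"
      using gram_quadratic_form_supported[OF supp gram] c by (simp add: x_def)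
    then have "G *v x = 0" by (rule psd_isotropic_imp_kernel[OF sym psd])
    moreover have "(G *v x) $ k = (\<Sum>i\<in>S. G $ k $ i * x $ i)"
      by (rule matrix_vector_mult_supported[OF supp])
    ultimately show "(\<Sum>i\<in>S. c i * G $ k $ i) = 0" by (simp add: x_def mult.commute)
  qed
  then show thesis using that by blast
qed

lemma unit_orthogonal_to_span_image:
  fixes N :: "'n::finite \<Rightarrow> real^'n"
  assumes "card S < CARD('n)"
  obtains e where "e \<bullet> e = 1" "\<And>y. y \<in> span (N ` S) \<Longrightarrow> e \<bullet> y = 0"
proof -
  have "dim (N ` S) \<le> card S"
    using dim_le_card'[of "N ` S"] card_image_le[of S N] by simp
  with assms have "dim (N ` S) < DIM(real^'n)" by simp
  then obtain e where "e \<noteq> 0" and e: "\<And>y. y \<in> span (N ` S) \<Longrightarrow> orthogonal e y"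
    using orthogonal_to_subspace_exists by blast
  have "norm (e /\<^sub>R norm e) = 1" using \<open>e \<noteq> 0\<close> by simp
  then have "(e /\<^sub>R norm e) \<bullet> (e /\<^sub>R norm e) = 1" by (simp add: power2_norm_eq_inner[symmetric])
  moreover have "(e /\<^sub>R norm e) \<bullet> y = 0" if "y \<in> span (N ` S)" for y
    using e[OF that] by (simp add: orthogonal_def)
  ultimately show thesis by (rule that)
qed

lemma psd_gram_extension:
  fixes G :: "real^'n::finite^'n" and N :: "'n \<Rightarrow> real^'n"
  assumes sym: "transpose G = G" and psd: "\<And>x. 0 \<le> x \<bullet> (G *v x)"
    and gram: "\<And>i j. i \<in> S \<Longrightarrow> j \<in> S \<Longrightarrow> G $ i $ j = N i \<bullet> N j" and "k \<notin> S"
  obtains v where "\<And>i. i \<in> S \<Longrightarrow> v \<bullet> N i = G $ k $ i" and "v \<bullet> v = G $ k $ k"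
proof -
  obtain p where p: "p \<in> span (N ` S)" and pN: "\<And>i. i \<in> S \<Longrightarrow> N i \<bullet> p = G $ k $ i"
    using psd_gram_row_in_span[OF sym psd gram] by blast
  have "card S < CARD('n)" using \<open>k \<notin> S\<close> by (intro psubset_card_mono) auto
  then obtain e where "e \<bullet> e = 1" and e: "\<And>y. y \<in> span (N ` S) \<Longrightarrow> e \<bullet> y = 0"
    using unit_orthogonal_to_span_image[of S N] by blast
  define v where "v = p + sqrt (G $ k $ k - p \<bullet> p) *\<^sub>R e"
  show ?thesis
  proof (rule that)
    fix i assume "i \<in> S"
    have "v \<bullet> N i = p \<bullet> N i + sqrt (G $ k $ k - p \<bullet> p) * (e \<bullet> N i)"
      by (simp add: v_def inner_add_left)
    also have "e \<bullet> N i = 0" using e \<open>i \<in> S\<close> by (simp add: span_base)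
    finally show "v \<bullet> N i = G $ k $ i" using pN[OF \<open>i \<in> S\<close>] by (simp add: inner_commute)
  next
    show "v \<bullet> v = G $ k $ k"
      using \<open>e \<bullet> e = 1\<close> e[OF p] psd_gram_extension_bound[OF sym psd gram \<open>k \<notin> S\<close> p pN]
      by (simp add: v_def inner_add_left inner_add_right inner_commute power2_eq_square[symmetric])
  qed
qed

lemma psd_matrix_gram:
  fixes G :: "real^'n::finite^'n"
  assumes sym: "transpose G = G" and psd: "\<And>x. 0 \<le> x \<bullet> (G *v x)"
  obtains N :: "'n \<Rightarrow> real^'n" where "\<And>i j. G $ i $ j = N i \<bullet> N j"
proof -
  have "\<exists>N :: 'n \<Rightarrow> real^'n. \<forall>i\<in>S. \<forall>j\<in>S. G $ i $ j = N i \<bullet> N j" for S :: "'n set"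
  proof (induction S rule: finite_induct[OF finite])
    case 1
    then show ?case by simp
  next
    case (2 k S)
    then obtain N :: "'n \<Rightarrow> real^'n" where gram: "\<And>i j. i \<in> S \<Longrightarrow> j \<in> S \<Longrightarrow> G $ i $ j = N i \<bullet> N j"
      by blast
    obtain v where v: "\<And>i. i \<in> S \<Longrightarrow> v \<bullet> N i = G $ k $ i" "v \<bullet> v = G $ k $ k"
      using psd_gram_extension[OF sym psd gram \<open>k \<notin> S\<close>] by blast
    have "G $ i $ j = (N(k := v)) i \<bullet> (N(k := v)) j" if "i \<in> insert k S" "j \<in> insert k S" for i j
      using that gram v \<open>k \<notin> S\<close> symmetric_matrix_entry[OF sym, of i k]
      by (auto simp: inner_commute)
    then show ?case by blast
  qed
  from this[of UNIV] show thesis using that by auto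
qed

lemma span_rows_iff_orthogonal_kernel:
  fixes G :: "real^'n::finite^'n"
  assumes "G *v w = 0" "w \<noteq> 0" and ker: "\<And>c. G *v c = 0 \<Longrightarrow> \<exists>s. c = s *\<^sub>R w"
  shows "v \<in> span (rows G) \<longleftrightarrow> v \<bullet> w = 0"
proof
  assume "v \<in> span (rows G)"
  then show "v \<bullet> w = 0"
    using orthogonal_nullspace_rowspace[OF assms(1)] by (simp add: orthogonal_def inner_commute)
next
  assume vw: "v \<bullet> w = 0"
  obtain y z where y: "y \<in> span (rows G)" and z: "\<And>u. u \<in> span (rows G) \<Longrightarrow> orthogonal z u"
    and v: "v = y + z"
    using orthogonal_subspace_decomp_exists[of "rows G" v] by metis
  have "(G *v z) $ i = 0" for i
  proof -
    have "row i G \<in> span (rows G)" by (rule span_base) (auto simp: rows_def)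
    then have "row i G \<bullet> z = 0" using z by (metis orthogonal_def inner_commute)
    then show ?thesis by (simp add: inner_row matrix_vector_mult_component)
  qed
  then obtain s where s: "z = s *\<^sub>R w" using ker by (metis vec_eq_iff zero_index)
  have "y \<bullet> w = 0"
    using orthogonal_nullspace_rowspace[OF assms(1) y] by (simp add: orthogonal_def inner_commute)
  then have "s * (w \<bullet> w) = 0" using vw v s by (simp add: inner_add_left)
  then have "z = 0" using s \<open>w \<noteq> 0\<close> by simp
  then show "v \<in> span (rows G)" using v y by simp
qed

definition pad_submatrix :: "real^'n::finite^'n \<Rightarrow> 'n set \<Rightarrow> real^'n^'n" where
  "pad_submatrix G S = (\<chi> i j. if i \<in> S \<and> j \<in> S then G $ i $ j else if i = j then 1 else 0)"

definition restrict_vec :: "'n set \<Rightarrow> real^'n::finite \<Rightarrow> real^'n" where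
  "restrict_vec S x = (\<chi> j. if j \<in> S then x $ j else 0)"

lemma det_pad_submatrix: "det (pad_submatrix G S) = principal_minor G S"
proof -
  let ?t = "\<lambda>p. of_int (sign p) * (\<Prod>i\<in>UNIV. pad_submatrix G S $ i $ p i)"
  have "det (pad_submatrix G S) = sum ?t {p. p permutes S}"
    unfolding det_def
  proof (rule sum.mono_neutral_right)
    show "\<forall>p\<in>{p. p permutes UNIV} - {p. p permutes S}. ?t p = 0"
    proof
      fix p assume that: "p \<in> {p. p permutes UNIV} - {p. p permutes S}"
      have "p permutes UNIV" "\<not> p permutes S" using that by auto
      then obtain i where "i \<notin> S" "p i \<noteq> i" unfolding permutes_def by blast
      then have "pad_submatrix G S $ i $ p i = 0" by (auto simp: pad_submatrix_def)
      then have "(\<Prod>i\<in>UNIV. pad_submatrix G S $ i $ p i) = 0" by (intro prod_zero) auto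
      then show "?t p = 0" by simp
    qed
  qed (auto simp: finite_permutations intro: permutes_subset)
  also have "\<dots> = principal_minor G S"
    unfolding principal_minor_def
  proof (rule sum.cong)
    fix p assume "p \<in> {p. p permutes S}"
    then have p: "p permutes S" by simp
    have "(\<Prod>i\<in>UNIV. pad_submatrix G S $ i $ p i) = (\<Prod>i\<in>S. pad_submatrix G S $ i $ p i)"
      using p by (intro prod.mono_neutral_right) (auto simp: pad_submatrix_def permutes_not_in)
    also have "\<dots> = (\<Prod>i\<in>S. G $ i $ p i)"
      using p by (intro prod.cong) (auto simp: pad_submatrix_def permutes_in_image)
    finally show "?t p = of_int (sign p) * (\<Prod>i\<in>S. G $ i $ p i)" by simp
  qed simp
  finally show ?thesis .
qed

lemma pad_submatrix_mult:
  "(pad_submatrix G S *v x) $ i = (if i \<in> S then (G *v restrict_vec S x) $ i else x $ i)"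
proof (cases "i \<in> S")
  case True
  then show ?thesis
    unfolding matrix_vector_mult_component by (auto simp: pad_submatrix_def restrict_vec_def intro!: sum.cong)
next
  case False
  then show ?thesis
    unfolding matrix_vector_mult_component pad_submatrix_def
    by (simp add: if_distrib[of "\<lambda>t. t * _"] cong: if_cong)
qed

lemma pad_submatrix_quadratic_form:
  "x \<bullet> (pad_submatrix G S *v x)
     = restrict_vec S x \<bullet> (G *v restrict_vec S x) + (\<Sum>i\<in>UNIV. if i \<notin> S then (x $ i)\<^sup>2 else 0)"
proof -
  let ?r = "restrict_vec S x"
  have "x \<bullet> (pad_submatrix G S *v x)
      = (\<Sum>i\<in>UNIV. (if i \<in> S then ?r $ i * (G *v ?r) $ i else 0) + (if i \<notin> S then (x $ i)\<^sup>2 else 0))"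
    unfolding inner_vec_def inner_real_def pad_submatrix_mult
    by (intro sum.cong) (auto simp: restrict_vec_def power2_eq_square)
  also have "\<dots> = ?r \<bullet> (G *v ?r) + (\<Sum>i\<in>UNIV. if i \<notin> S then (x $ i)\<^sup>2 else 0)"
    by (simp add: sum.distrib inner_vec_def inner_real_def restrict_vec_def
        if_distrib[of "\<lambda>t. t * _"] cong: if_cong)
  finally show ?thesis .
qed

lemma pos_definite_det_pos:
  fixes A :: "real^'n::finite^'n"
  assumes pd: "\<And>x. x \<noteq> 0 \<Longrightarrow> 0 < x \<bullet> (A *v x)"
  shows "det A > 0"
proof (rule ccontr)
  assume "\<not> det A > 0"
  define f where "f t = (1 - t) *\<^sub>R A + t *\<^sub>R mat 1" for t :: real
  have "continuous_on {0..1} (\<lambda>t. det (f t))"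
    unfolding det_def f_def by (intro continuous_intros)
  then obtain t where t: "0 \<le> t" "t \<le> 1" "det (f t) = 0"
    using IVT'[of "\<lambda>t. det (f t)" 0 0 1] \<open>\<not> det A > 0\<close> by (auto simp: f_def det_I)
  then obtain x where x: "x \<noteq> 0" "f t *v x = 0" using det_eq_0_iff_kernel by blast
  have "x \<bullet> (f t *v x) = (1 - t) * (x \<bullet> (A *v x)) + t * (x \<bullet> x)"
    by (simp add: f_def scaleR_matrix_vector_assoc[symmetric] matrix_vector_mult_add_rdistrib inner_add_right)
  moreover have "0 < (1 - t) * (x \<bullet> (A *v x)) + t * (x \<bullet> x)"
    using t pd[OF x(1)] x(1)
    by (cases "t = 1") (auto intro: add_pos_nonneg)
  ultimately show False using x by simp
qed

section \<open>Simplices and butterflies\<close>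

definition altitude :: "('n::finite \<Rightarrow> real^'n) \<Rightarrow> 'n \<Rightarrow> real" where
  "altitude a p = dist (a p) (foot a p (a p))"

definition scaled_normal :: "('n::finite \<Rightarrow> real^'n) \<Rightarrow> 'n \<Rightarrow> real^'n" where
  "scaled_normal a p = inverse (altitude a p) *\<^sub>R inner_normal a p"

lemma nondeg_simplex_vertex_notin_facet:
  assumes "nondeg_simplex v"
  shows "v p \<notin> affine hull (v ` (UNIV - {p}))"
proof -
  have "range v - {v p} = v ` (UNIV - {p})"
    using assms by (auto simp: nondeg_simplex_def dest: injD)
  moreover have "v p \<notin> affine hull (range v - {v p})"
    using assms unfolding nondeg_simplex_def affine_dependent_def by blast
  ultimately show ?thesis by simp
qed

lemma nondeg_simplexI:
  fixes v :: "'n::finite \<Rightarrow> real^'n"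
  assumes indep: "\<And>c. sum c UNIV = 0 \<Longrightarrow> (\<Sum>j\<in>UNIV. c j *\<^sub>R v j) = 0 \<Longrightarrow> \<forall>j. c j = 0"
  shows "nondeg_simplex v"
proof -
  have "inj v"
  proof (rule injI, rule ccontr)
    fix j k assume "v j = v k" "j \<noteq> k"
    define c where "c i = (if i = j then 1 else 0) - (if i = k then 1 else (0::real))" for i
    have sum_c: "sum c UNIV = 0" by (simp add: c_def sum_subtractf)
    have "(\<Sum>i\<in>UNIV. c i *\<^sub>R v i) = v j - v k"
      by (simp add: c_def scaleR_diff_left sum_subtractf if_distrib[of "\<lambda>t. t *\<^sub>R _"] cong: if_cong)
    with \<open>v j = v k\<close> have "\<forall>i. c i = 0" using indep[OF sum_c] by simp
    then show False using \<open>j \<noteq> k\<close> by (auto simp: c_def dest: spec[of _ j])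
  qed
  moreover have "\<not> affine_dependent (range v)"
  proof
    assume "affine_dependent (range v)"
    then obtain U where U: "sum U (range v) = 0" "\<exists>w\<in>range v. U w \<noteq> 0"
      "(\<Sum>w\<in>range v. U w *\<^sub>R w) = 0"
      using affine_dependent_explicit_finite[of "range v"] by auto
    have "sum (\<lambda>j. U (v j)) UNIV = 0"
      using U(1) sum.reindex[OF \<open>inj v\<close>, of U] by (simp add: o_def)
    moreover have "(\<Sum>j\<in>UNIV. U (v j) *\<^sub>R v j) = 0"
      using U(3) sum.reindex[OF \<open>inj v\<close>, of "\<lambda>w. U w *\<^sub>R w"] by (simp add: o_def)
    ultimately have "\<forall>j. U (v j) = 0" by (rule indep)
    then show False using U(2) by auto
  qed
  ultimately show ?thesis by (simp add: nondeg_simplex_def)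
qed

lemma sum_scaleR_shift:
  fixes v :: "'i \<Rightarrow> 'a::real_vector"
  assumes "sum c S = 0"
  shows "(\<Sum>j\<in>S. c j *\<^sub>R v j) = (\<Sum>j\<in>S. c j *\<^sub>R (v j - y))"
  using assms by (simp add: scaleR_diff_right sum_subtractf scaleR_sum_left[symmetric])

locale euclidean_simplex =
  fixes a :: "'n::finite \<Rightarrow> real^'n"
  assumes nondeg: "nondeg_simplex a" and card_ge_2: "2 \<le> CARD('n)"
begin

abbreviation "N \<equiv> inner_normal a"
abbreviation "F \<equiv> facet_hull a"
abbreviation "\<alpha> \<equiv> altitude a"
abbreviation "u \<equiv> scaled_normal a"

lemma exists_other: "\<exists>r. r \<noteq> (p::'n)"
proof (rule ccontr)
  assume "\<nexists>r. r \<noteq> p"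
  then have "(UNIV :: 'n set) = {p}" by auto
  then have "CARD('n) = 1" by (metis One_nat_def card_1_singleton_iff)
  then show False using card_ge_2 by simp
qed

definition other :: "'n \<Rightarrow> 'n" where "other q = (SOME r. r \<noteq> q)"

lemma other_ne: "other q \<noteq> q"
  unfolding other_def using someI_ex[OF exists_other[of q]] .

lemma facet_hull_affine: "affine (F p)" "closed (F p)" "convex (F p)"
  by (simp_all add: facet_hull_def)

lemma vertex_in_facet_hull: "r \<noteq> p \<Longrightarrow> a r \<in> F p"
  by (simp add: facet_hull_def hull_inc)

lemma foot_in_facet_hull: "foot a p x \<in> F p"
proof -
  have "F p \<noteq> {}" using vertex_in_facet_hull[OF other_ne[of p]] by auto
  then show ?thesis unfolding foot_def by (rule closest_point_in_set[OF facet_hull_affine(2)])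
qed

lemma foot_orthogonal:
  assumes "s \<in> F p" "s' \<in> F p"
  shows "(x - foot a p x) \<bullet> (s - s') = 0"
proof -
  let ?f = "foot a p x"
  have le: "(x - ?f) \<bullet> (t - ?f) \<le> 0" if "t \<in> F p" for t
    unfolding foot_def by (rule closest_point_dot[OF facet_hull_affine(3,2) that])
  have eq: "(x - ?f) \<bullet> (t - ?f) = 0" if "t \<in> F p" for t
  proof -
    have "2 *\<^sub>R ?f + (-1) *\<^sub>R t \<in> F p"
      by (rule mem_affine[OF facet_hull_affine(1) foot_in_facet_hull that]) simp
    from le[OF this] have "0 \<le> (x - ?f) \<bullet> (t - ?f)"
      by (simp add: algebra_simps scaleR_2 inner_diff_right)
    with le[OF that] show ?thesis by simp
  qed
  have "s - s' = (s - ?f) - (s' - ?f)" by simp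
  then show ?thesis using eq[OF assms(1)] eq[OF assms(2)] by (simp add: inner_diff_right)
qed

lemma vertex_notin_facet_hull: "a p \<notin> F p"
  using nondeg_simplex_vertex_notin_facet[OF nondeg, of p] by (simp add: facet_hull_def)

lemma vertex_ne_foot: "a p \<noteq> foot a p (a p)"
  using vertex_notin_facet_hull foot_in_facet_hull by metis

lemma altitude_pos: "\<alpha> p > 0"
  using vertex_ne_foot by (simp add: altitude_def)

lemma inner_normal_eq: "N p = inverse (\<alpha> p) *\<^sub>R (a p - foot a p (a p))"
  by (simp add: inner_normal_def altitude_def sgn_div_norm dist_norm divide_inverse_commute)

lemma norm_inner_normal: "norm (N p) = 1"
  using vertex_ne_foot[of p] by (simp add: inner_normal_def norm_sgn)

lemma inner_normal_self: "N p \<bullet> N p = 1"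
  using norm_inner_normal by (simp add: dot_square_norm)

lemma inner_normal_orthogonal: "s \<in> F p \<Longrightarrow> s' \<in> F p \<Longrightarrow> N p \<bullet> (s - s') = 0"
  using foot_orthogonal[of s p s' "a p"] by (simp add: inner_normal_eq)

lemma inner_normal_altitude:
  assumes "s \<in> F p"
  shows "(a p - s) \<bullet> N p = \<alpha> p"
proof -
  let ?f = "foot a p (a p)"
  have e: "a p - s = \<alpha> p *\<^sub>R N p + (?f - s)"
    using altitude_pos[of p] by (simp add: inner_normal_eq)
  have "(a p - s) \<bullet> N p = \<alpha> p * (N p \<bullet> N p) + (?f - s) \<bullet> N p"
    unfolding e by (simp add: inner_add_left)
  moreover have "(?f - s) \<bullet> N p = 0"
    using inner_normal_orthogonal[OF foot_in_facet_hull assms] by (metis inner_commute)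
  ultimately show ?thesis by (simp add: inner_normal_self)
qed

lemma scaled_normal_eq: "u q = inverse (\<alpha> q) *\<^sub>R N q"
  by (simp add: scaled_normal_def)

lemma inner_normal_vertex_diff:
  "N q \<bullet> (a j - a k) = (if q = j then \<alpha> q else 0) - (if q = k then \<alpha> q else 0)"
proof (cases "j = k")
  case False
  have alt: "N q \<bullet> (a q - a r) = \<alpha> q" if "r \<noteq> q" for r
    by (subst inner_commute) (rule inner_normal_altitude[OF vertex_in_facet_hull[OF that]])
  consider "q = j" | "q = k" | "q \<noteq> j" "q \<noteq> k" by blast
  then show ?thesis
  proof cases
    case 1
    with False alt[of k] show ?thesis by simp
  next
    case 2
    have "N q \<bullet> (a j - a q) = - (N q \<bullet> (a q - a j))" by (simp add: inner_diff_right)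
    with 2 False alt[of j] show ?thesis by simp
  next
    case 3
    then show ?thesis using inner_normal_orthogonal[OF vertex_in_facet_hull vertex_in_facet_hull] by simp
  qed
qed simp

lemma scaled_normal_vertex_diff:
  "u q \<bullet> (a j - a k) = (if q = j then 1 else 0) - (if q = k then 1 else 0)"
  using altitude_pos[of q]
  by (cases "q = j"; cases "q = k") (simp_all add: scaled_normal_eq inner_normal_vertex_diff)

abbreviation "V r \<equiv> span (range (\<lambda>j. a j - a r))"

lemma affine_hull_diff_in_V:
  assumes "s \<in> affine hull (range a)"
  shows "s - a k \<in> V r"
proof -
  obtain l where l: "sum l (range a) = 1" "(\<Sum>v\<in>range a. l v *\<^sub>R v) = s"
    using assms affine_hull_finite[of "range a"] by auto
  have "s - a k = (\<Sum>v\<in>range a. l v *\<^sub>R v) - (\<Sum>v\<in>range a. l v) *\<^sub>R a k"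
    using l by simp
  also have "\<dots> = (\<Sum>v\<in>range a. l v *\<^sub>R (v - a k))"
    by (simp add: scaleR_diff_right sum_subtractf scaleR_sum_left)
  finally have "s - a k = (\<Sum>v\<in>range a. l v *\<^sub>R (v - a k))" .
  moreover have "v - a k \<in> V r" if v: "v \<in> range a" for v
  proof -
    obtain j where "v = a j" using v by blast
    then have "v - a k = (a j - a r) - (a k - a r)" by simp
    then show ?thesis by (metis span_base span_diff rangeI)
  qed
  ultimately show ?thesis by (simp add: span_sum span_scale)
qed

lemma facet_hull_subset: "F p \<subseteq> affine hull (range a)"
  unfolding facet_hull_def by (rule hull_mono) auto

lemma inner_normal_in_V: "N p \<in> V r"
proof -
  have "a p - foot a p (a p) = (a p - a r) - (foot a p (a p) - a r)" by simp
  moreover have "foot a p (a p) - a r \<in> V r"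
    using affine_hull_diff_in_V facet_hull_subset foot_in_facet_hull by blast
  ultimately have "a p - foot a p (a p) \<in> V r" by (metis span_base span_diff rangeI)
  then show ?thesis by (simp add: inner_normal_eq span_scale)
qed

lemma sum_scaled_normals: "(\<Sum>q\<in>UNIV. u q) = 0"
proof -
  fix r :: 'n
  show ?thesis
  proof (rule in_span_orthogonal_eq_0)
    show "(\<Sum>q\<in>UNIV. u q) \<in> V r"
      by (intro span_sum span_scale) (simp add: scaled_normal_eq inner_normal_in_V span_scale)
  next
    fix x assume "x \<in> range (\<lambda>j. a j - a r)"
    then show "(\<Sum>q\<in>UNIV. u q) \<bullet> x = 0"
      by (auto simp: inner_sum_left scaled_normal_vertex_diff sum_subtractf)
  qed
qed

lemma scaled_normals_relation:
  assumes "(\<Sum>q\<in>UNIV. c q *\<^sub>R u q) = 0"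
  shows "c j = c k"
proof -
  have "0 = (\<Sum>q\<in>UNIV. c q *\<^sub>R u q) \<bullet> (a j - a k)" using assms by simp
  also have "\<dots> = c j - c k"
    by (simp add: inner_sum_left scaled_normal_vertex_diff right_diff_distrib sum_subtractf
        if_distrib[of "(*) _"] cong: if_cong)
  finally show ?thesis by simp
qed

lemma V_orthogonal_eq_0:
  assumes z: "z \<in> V r" and orth: "\<And>q. u q \<bullet> z = 0"
  shows "z = 0"
proof -
  obtain c where c: "z = (\<Sum>j\<in>UNIV. c j *\<^sub>R (a j - a r))"
    using in_span_imageE[OF z finite] .
  have "c q = 0" if "q \<noteq> r" for q
  proof -
    have "0 = u q \<bullet> z" using orth by simp
    also have "\<dots> = c q" using that
      by (simp add: c inner_sum_right scaled_normal_vertex_diff if_distrib[of "(*) _"] cong: if_cong)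
    finally show ?thesis by simp
  qed
  then have "c j *\<^sub>R (a j - a r) = 0" for j by (cases "j = r") simp_all
  then show ?thesis unfolding c by (intro sum.neutral) blast
qed

lemma span_scaled_normals: "span (range u) = V r"
proof
  show u_V: "span (range u) \<subseteq> V r"
    by (rule span_minimal) (auto simp: scaled_normal_eq inner_normal_in_V span_scale)
  show "V r \<subseteq> span (range u)"
  proof
    fix z assume z: "z \<in> V r"
    obtain y w where y: "y \<in> span (range u)" and w: "\<And>v. v \<in> span (range u) \<Longrightarrow> orthogonal w v"
      and "z = y + w"
      using orthogonal_subspace_decomp_exists[of "range u" z] by metis
    have "w = z - y" using \<open>z = y + w\<close> by simp
    then have "w \<in> V r" using span_diff[OF z, of y] y u_V by blast
    moreover have "u q \<bullet> w = 0" for q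
      using w[of "u q"] by (simp add: span_base orthogonal_def inner_commute)
    ultimately have "w = 0" by (rule V_orthogonal_eq_0)
    then show "z \<in> span (range u)" using y \<open>z = y + w\<close> by simp
  qed
qed

text \<open>The linear hyperplane parallel to \<open>\<Delta>\<close>.\<close>

abbreviation "D \<equiv> span (range u)"

lemma vertex_diff_in_D: "a j - a k \<in> D"
  using span_scaled_normals[of k] by (auto intro: span_base)

lemma affine_hull_diff_in_D: "s \<in> affine hull (range a) \<Longrightarrow> s - a k \<in> D"
  using affine_hull_diff_in_V[of s k k] span_scaled_normals[of k] by simp

lemma inner_normal_in_D: "N p \<in> D"
  using inner_normal_in_V[of p p] span_scaled_normals[of p] by simp

lemma D_orthogonal_eq_0: "z \<in> D \<Longrightarrow> (\<And>q. u q \<bullet> z = 0) \<Longrightarrow> z = 0"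
  by (rule in_span_orthogonal_eq_0) (auto simp: inner_commute)

lemma orthogonal_facet_imp_parallel_normal:
  assumes "z \<in> D" and orth: "\<And>s s'. s \<in> F p \<Longrightarrow> s' \<in> F p \<Longrightarrow> z \<bullet> (s - s') = 0"
  shows "z = (z \<bullet> N p) *\<^sub>R N p"
proof -
  let ?r = "other p"
  define v where "v = z - (z \<bullet> N p) *\<^sub>R N p"
  have vF: "v \<bullet> (s - s') = 0" if "s \<in> F p" "s' \<in> F p" for s s'
    using orth[OF that] inner_normal_orthogonal[OF that] by (simp add: v_def inner_diff_left)
  have "v \<bullet> (a j - a ?r) = 0" for j
  proof (cases "j = p")
    case False
    then show ?thesis using vF[OF vertex_in_facet_hull vertex_in_facet_hull[OF other_ne]] by simp
  next
    case True
    have e: "a p - a ?r = \<alpha> p *\<^sub>R N p + (foot a p (a p) - a ?r)"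
      using altitude_pos[of p] by (simp add: inner_normal_eq)
    have "v \<bullet> N p = 0" by (simp add: v_def inner_diff_left inner_normal_self)
    then have "v \<bullet> (a p - a ?r) = v \<bullet> (foot a p (a p) - a ?r)"
      unfolding e by (simp add: inner_add_right)
    then show ?thesis using True vF[OF foot_in_facet_hull vertex_in_facet_hull[OF other_ne]] by simp
  qed
  moreover have "v \<in> D"
    unfolding v_def using \<open>z \<in> D\<close> inner_normal_in_D by (intro span_diff span_scale)
  then have "v \<in> V ?r" using span_scaled_normals[of ?r] by simp
  ultimately have "v = 0" using in_span_orthogonal_eq_0[of v] by blast
  then show ?thesis by (simp add: v_def)
qed

lemma foot_eq:
  assumes "x - a k \<in> D"
  shows "foot a p x = x - ((x - a (other p)) \<bullet> N p) *\<^sub>R N p"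
proof -
  let ?f = "foot a p x" and ?r = "other p"
  have "x - ?f = (x - a k) - (?f - a k)" by simp
  also have "\<dots> \<in> D"
    using assms affine_hull_diff_in_D[OF subsetD[OF facet_hull_subset foot_in_facet_hull]]
    by (rule span_diff)
  finally have "x - ?f \<in> D" .
  then have "x - ?f = ((x - ?f) \<bullet> N p) *\<^sub>R N p"
    by (rule orthogonal_facet_imp_parallel_normal[OF _ foot_orthogonal])
  moreover have "(x - ?f) \<bullet> N p = (x - a ?r) \<bullet> N p"
  proof -
    have "(?f - a ?r) \<bullet> N p = 0"
      using inner_normal_orthogonal[OF foot_in_facet_hull vertex_in_facet_hull[OF other_ne]]
      by (simp add: inner_commute)
    moreover have "(x - a ?r) \<bullet> N p = (x - ?f) \<bullet> N p + (?f - a ?r) \<bullet> N p"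
      by (simp add: inner_add_left[symmetric])
    ultimately show ?thesis by simp
  qed
  ultimately have "x - ?f = ((x - a ?r) \<bullet> N p) *\<^sub>R N p" by simp
  then show ?thesis by (simp add: algebra_simps)
qed

lemma affine_relation_trivial:
  assumes "sum c UNIV = 0" "(\<Sum>j\<in>UNIV. c j *\<^sub>R a j) = 0"
  shows "c q = 0"
proof -
  have "0 = u q \<bullet> (\<Sum>j\<in>UNIV. c j *\<^sub>R (a j - a q))"
    using assms sum_scaleR_shift[OF assms(1), of a "a q"] by simp
  also have "\<dots> = c q - sum c UNIV"
    by (simp add: inner_sum_right scaled_normal_vertex_diff right_diff_distrib sum_subtractf
        if_distrib[of "(*) _"] cong: if_cong)
  finally show ?thesis using assms(1) by simp
qed

lemma scaled_normal_affine_combination: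
  assumes "sum l UNIV = 1"
  shows "u q \<bullet> ((\<Sum>j\<in>UNIV. l j *\<^sub>R a j) - a k) = l q - (if q = k then 1 else 0)"
proof -
  have "(\<Sum>j\<in>UNIV. l j *\<^sub>R a j) - a k = (\<Sum>j\<in>UNIV. l j *\<^sub>R (a j - a k))"
    using assms by (simp add: scaleR_diff_right sum_subtractf scaleR_sum_left[symmetric])
  then show ?thesis
    using assms by (simp add: inner_sum_right scaled_normal_vertex_diff right_diff_distrib sum_subtractf
        sum_distrib_right[symmetric] if_distrib[of "(*) _"] cong: if_cong)
qed

lemma affine_combination_diff_in_D:
  assumes "sum l UNIV = 1"
  shows "(\<Sum>j\<in>UNIV. l j *\<^sub>R a j) - a k \<in> D"
proof -
  have "(\<Sum>j\<in>UNIV. l j *\<^sub>R a j) - a k = (\<Sum>j\<in>UNIV. l j *\<^sub>R (a j - a k))"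
    using assms by (simp add: scaleR_diff_right sum_subtractf scaleR_sum_left[symmetric])
  also have "\<dots> \<in> D" by (intro span_sum span_scale vertex_diff_in_D)
  finally show ?thesis .
qed

lemma scaled_normal_eqI:
  assumes msum: "(\<Sum>q\<in>UNIV. m q) = 0" and m_span: "\<And>j k. a j - a k \<in> span (range m)"
    and m_diff: "\<And>q j k. m q \<bullet> (a j - a k) = (if q = j then 1 else 0) - (if q = k then 1 else 0)"
  shows "u q = m q"
proof -
  have "V q \<subseteq> span (range m)" by (rule span_minimal) (use m_span in auto)
  moreover have "u q \<in> V q" using span_scaled_normals[of q] span_base[of "u q" "range u"] by simp
  ultimately have "u q - m q \<in> span (range m)" by (blast intro: span_diff span_base)
  from in_span_imageE[OF this finite]
  obtain c where c: "u q - m q = (\<Sum>l\<in>UNIV. c l *\<^sub>R m l)" .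
  have const: "c j = c k" for j k
  proof -
    have "0 = (u q - m q) \<bullet> (a j - a k)"
      by (simp add: inner_diff_left scaled_normal_vertex_diff m_diff)
    also have "\<dots> = c j - c k"
      by (simp add: c inner_sum_left m_diff right_diff_distrib sum_subtractf
          if_distrib[of "(*) _"] cong: if_cong)
    finally show ?thesis by simp
  qed
  have "u q - m q = (\<Sum>l\<in>UNIV. c q *\<^sub>R m l)"
    unfolding c by (intro sum.cong refl) (metis const)
  then show ?thesis by (simp add: scaleR_sum_right[symmetric] msum)
qed

lemma nondeg_simplex_replace_vertex:
  assumes "u p \<bullet> (x - a (other p)) \<noteq> 0"
  shows "nondeg_simplex (a(p := x))"
proof (rule nondeg_simplexI)
  let ?v = "a(p := x)" and ?r = "other p"
  fix c assume c0: "sum c UNIV = 0" and cv: "(\<Sum>j\<in>UNIV. c j *\<^sub>R ?v j) = 0"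
  have "0 = u p \<bullet> (\<Sum>j\<in>UNIV. c j *\<^sub>R (?v j - a ?r))"
    using sum_scaleR_shift[OF c0, of ?v "a ?r"] cv by simp
  also have "\<dots> = (\<Sum>j\<in>UNIV. if j = p then c p * (u p \<bullet> (x - a ?r)) else 0)"
    unfolding inner_sum_right
    by (intro sum.cong) (auto simp: scaled_normal_vertex_diff other_ne[symmetric])
  finally have "c p = 0" using assms by simp
  then have "(\<Sum>j\<in>UNIV. c j *\<^sub>R a j) = (\<Sum>j\<in>UNIV. c j *\<^sub>R ?v j)"
    by (intro sum.cong) auto
  with cv have "(\<Sum>j\<in>UNIV. c j *\<^sub>R a j) = 0" by simp
  then show "\<forall>j. c j = 0" using affine_relation_trivial[OF c0] by blast
qed

definition inv_altitudes :: "real^'n" where "inv_altitudes = (\<chi> q. inverse (\<alpha> q))"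

lemma gram_of_entry: "gram_of a $ p $ q = N p \<bullet> N q"
  by (simp add: gram_of_def)

lemma gram_of_symmetric: "transpose (gram_of a) = gram_of a"
  by (simp add: transpose_def gram_of_def inner_commute)

lemma gram_of_diag: "gram_of a $ p $ p = 1"
  by (simp add: gram_of_def inner_normal_self)

lemma gram_of_psd: "0 \<le> x \<bullet> (gram_of a *v x)"
  using gram_quadratic_form[OF gram_of_entry, of x] by simp

lemma inv_altitudes_pos: "inv_altitudes $ q > 0"
  using altitude_pos by (simp add: inv_altitudes_def)

lemma gram_of_inv_altitudes: "gram_of a *v inv_altitudes = 0"
  using gram_matrix_vector_mult[OF gram_of_entry]
  by (simp add: vec_eq_iff inv_altitudes_def scaled_normal_eq[symmetric] sum_scaled_normals)

lemma gram_of_kernel: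
  assumes "gram_of a *v c = 0"
  shows "\<exists>s. c = s *\<^sub>R inv_altitudes"
proof -
  have "(\<Sum>j\<in>UNIV. c $ j *\<^sub>R N j) = 0"
    using gram_quadratic_form[OF gram_of_entry, of c] assms by simp
  moreover have "c $ j *\<^sub>R N j = (c $ j * \<alpha> j) *\<^sub>R u j" for j
    using altitude_pos[of j] by (simp add: scaled_normal_eq)
  ultimately have "(\<Sum>j\<in>UNIV. (c $ j * \<alpha> j) *\<^sub>R u j) = 0" by simp
  then have rel: "c $ j * \<alpha> j = c $ q * \<alpha> q" for j q by (rule scaled_normals_relation)
  fix q
  define t where "t = c $ q * \<alpha> q"
  have "c $ j = t * inverse (\<alpha> j)" for j
    using rel[of j q] altitude_pos[of j] unfolding t_def[symmetric] by (simp add: field_simps)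
  then have "c = t *\<^sub>R inv_altitudes" by (simp add: vec_eq_iff inv_altitudes_def)
  then show ?thesis by blast
qed

end

locale euclidean_butterfly = euclidean_simplex a for a :: "'n::finite \<Rightarrow> real^'n" +
  fixes b :: "'n \<Rightarrow> real^'n"
  assumes wings: "nondeg_simplex (a(p := b p))"
begin

abbreviation "\<beta> \<equiv> beta a b"
abbreviation "b0 \<equiv> b_rot a b"
abbreviation "H \<equiv> hmat_of a b"

lemma wing_vertex_notin_facet_hull: "b p \<notin> F p"
proof -
  have img: "(a(p := b p)) ` (UNIV - {p}) = a ` (UNIV - {p})" by auto
  have "(a(p := b p)) p \<notin> affine hull ((a(p := b p)) ` (UNIV - {p}))"
    by (rule nondeg_simplex_vertex_notin_facet[OF wings])
  then show ?thesis unfolding img facet_hull_def by simp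
qed

lemma beta_pos: "\<beta> p > 0"
proof -
  have "b p \<noteq> foot a p (b p)" using wing_vertex_notin_facet_hull foot_in_facet_hull by metis
  then show ?thesis by (simp add: beta_def)
qed

lemma hmat_of_entry: "H $ p $ q = ((b0 p - a (other q)) \<bullet> N q) / \<beta> p"
  by (simp add: hmat_of_def other_def)

lemma hmat_of_diag: "H $ p $ p = 1"
proof -
  let ?f = "foot a p (b p)"
  have e: "b0 p - a (other p) = (?f - a (other p)) + \<beta> p *\<^sub>R N p" by (simp add: b_rot_def)
  have "(b0 p - a (other p)) \<bullet> N p = (?f - a (other p)) \<bullet> N p + \<beta> p"
    unfolding e by (simp add: inner_add_left inner_normal_self)
  also have "(?f - a (other p)) \<bullet> N p = 0"
    using inner_normal_orthogonal[OF foot_in_facet_hull vertex_in_facet_hull[OF other_ne]]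
    by (simp add: inner_commute)
  finally show ?thesis using beta_pos[of p] by (simp add: hmat_of_entry)
qed

lemma scaled_normal_b_rot:
  "u k \<bullet> (b0 p - a j) = \<beta> p * H $ p $ k * inverse (\<alpha> k) - (if k = j then 1 else 0)"
proof -
  have e: "b0 p - a j = (b0 p - a (other k)) + (a (other k) - a j)" by simp
  have "u k \<bullet> (b0 p - a j) = u k \<bullet> (b0 p - a (other k)) + u k \<bullet> (a (other k) - a j)"
    by (subst e) (rule inner_add_right)
  also have "u k \<bullet> (b0 p - a (other k)) = inverse (\<alpha> k) * ((b0 p - a (other k)) \<bullet> N k)"
    by (simp add: scaled_normal_eq inner_commute[of "N k"])
  also have "(b0 p - a (other k)) \<bullet> N k = \<beta> p * H $ p $ k"
    using beta_pos[of p] by (simp add: hmat_of_entry)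
  finally show ?thesis using other_ne[of k] by (simp add: scaled_normal_vertex_diff mult_ac)
qed

lemma row_hmat_of_inv_altitudes: "row p H \<bullet> inv_altitudes = inverse (\<beta> p)"
proof -
  have "row p H \<bullet> inv_altitudes = (\<Sum>q\<in>UNIV. H $ p $ q * inverse (\<alpha> q))"
    by (simp add: inner_row inv_altitudes_def)
  also have "\<dots> = (\<Sum>q\<in>UNIV. inverse (\<beta> p) * (u q \<bullet> (b0 p - a p) + (if q = p then 1 else 0)))"
    using beta_pos[of p] by (intro sum.cong refl) (simp add: scaled_normal_b_rot field_simps)
  also have "\<dots> = inverse (\<beta> p) * ((\<Sum>q\<in>UNIV. u q) \<bullet> (b0 p - a p) + 1)"
    by (simp add: sum_distrib_left[symmetric] sum.distrib inner_sum_left)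
  finally show ?thesis by (simp add: sum_scaled_normals)
qed

lemma b_rot_diff_in_D: "b0 p - a q \<in> D"
proof -
  have "foot a p (b p) - a q \<in> D"
    using affine_hull_diff_in_D facet_hull_subset foot_in_facet_hull by blast
  then have "(foot a p (b p) - a q) + \<beta> p *\<^sub>R N p \<in> D"
    using inner_normal_in_D by (intro span_add span_scale)
  moreover have "b0 p - a q = (foot a p (b p) - a q) + \<beta> p *\<^sub>R N p" by (simp add: b_rot_def)
  ultimately show ?thesis by metis
qed

lemma dist_wing_vertex:
  assumes "q \<noteq> p"
  shows "dist (b p) (a q) = norm (b0 p - a q)"
proof -
  let ?f = "foot a p (b p)"
  have aq: "a q \<in> F p" using vertex_in_facet_hull[OF assms] .
  have "orthogonal (b p - ?f) (?f - a q)"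
    unfolding orthogonal_def by (rule foot_orthogonal[OF foot_in_facet_hull aq])
  then have "(norm (b p - a q))\<^sup>2 = (norm (b p - ?f))\<^sup>2 + (norm (?f - a q))\<^sup>2"
    using norm_add_Pythagorean[of "b p - ?f" "?f - a q"] by simp
  moreover have "orthogonal (\<beta> p *\<^sub>R N p) (?f - a q)"
    using inner_normal_orthogonal[OF foot_in_facet_hull aq] by (simp add: orthogonal_def)
  then have "(norm (b0 p - a q))\<^sup>2 = (norm (\<beta> p *\<^sub>R N p))\<^sup>2 + (norm (?f - a q))\<^sup>2"
    using norm_add_Pythagorean[of "\<beta> p *\<^sub>R N p" "?f - a q"] by (simp add: b_rot_def algebra_simps)
  moreover have "norm (b p - ?f) = \<beta> p" by (simp add: beta_def dist_norm)
  moreover have "norm (\<beta> p *\<^sub>R N p) = \<beta> p" using beta_pos[of p] by (simp add: norm_inner_normal)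
  ultimately have "(norm (b p - a q))\<^sup>2 = (norm (b0 p - a q))\<^sup>2" by simp
  then show ?thesis by (simp add: dist_norm power2_eq_iff_nonneg)
qed

end

lemma euclidean_butterflyI:
  assumes "butterfly a b" "2 \<le> CARD('n::finite)"
  shows "euclidean_butterfly (a :: 'n \<Rightarrow> real^'n) b"
  using assms by unfold_locales (auto simp: butterfly_def)

section \<open>The reversion invariant\<close>

definition admissible :: "real^'n::finite^'n \<Rightarrow> real^'n^'n \<Rightarrow> real^'n \<Rightarrow> bool" where
  "admissible G H w \<longleftrightarrow> inW G H \<and> (\<forall>x. 0 \<le> x \<bullet> (G *v x)) \<and> G *v w = 0 \<and> (\<forall>i. w $ i \<noteq> 0)
     \<and> (\<forall>c. G *v c = 0 \<longrightarrow> (\<exists>s. c = s *\<^sub>R w)) \<and> (\<forall>p. row p H \<bullet> w \<noteq> 0)"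

lemma butterfly_admissible:
  assumes "butterfly a b" "2 \<le> CARD('n::finite)"
  shows "admissible (gram_of a) (hmat_of a b) (euclidean_simplex.inv_altitudes (a :: 'n \<Rightarrow> real^'n))"
proof -
  interpret euclidean_butterfly a b by (rule euclidean_butterflyI[OF assms])
  show ?thesis
    unfolding admissible_def inW_def
  proof (intro conjI allI impI)
    show "row p (hmat_of a b) \<bullet> inv_altitudes \<noteq> 0" for p
      using row_hmat_of_inv_altitudes[of p] beta_pos[of p] by simp
    show "inv_altitudes $ i \<noteq> 0" for i using inv_altitudes_pos[of i] by simp
  qed (auto simp: gram_of_symmetric gram_of_diag hmat_of_diag gram_of_psd gram_of_inv_altitudes
      gram_of_kernel)
qed

definition flip :: "'n::finite \<Rightarrow> real^'n \<Rightarrow> real^'n" where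
  "flip p x = (\<chi> i. (if i = p then -1 else 1) * x $ i)"

lemma flip_flip [simp]: "flip p (flip p x) = x"
  by (simp add: flip_def vec_eq_iff)

lemma flip_eq_0_iff [simp]: "flip p x = 0 \<longleftrightarrow> x = 0"
  by (auto simp: flip_def vec_eq_iff)

lemma flip_scaleR: "flip p (s *\<^sub>R x) = s *\<^sub>R flip p x"
  by (simp add: flip_def vec_eq_iff)

lemma a_rev_fst_entry:
  "fst (a_rev p (G, H)) $ i $ j = (if i = p then -1 else 1) * (if j = p then -1 else 1) * G $ i $ j"
  by (auto simp: a_rev_def)

lemma a_rev_fst_mult: "fst (a_rev p (G, H)) *v x = flip p (G *v flip p x)"
  by (simp add: vec_eq_iff matrix_vector_mult_component a_rev_fst_entry flip_def sum_distrib_left mult_ac)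

lemma a_rev_fst_quadratic_form: "x \<bullet> (fst (a_rev p (G, H)) *v x) = flip p x \<bullet> (G *v flip p x)"
  by (simp add: a_rev_fst_mult inner_vec_def inner_real_def flip_def mult_ac)

lemma a_rev_snd_row:
  assumes "G *v w = 0" "G $ p $ p = 1" "H $ p $ p = 1"
  shows "row i (snd (a_rev p (G, H))) \<bullet> flip p w = row i H \<bullet> w"
proof (cases "i = p")
  case True
  then have "snd (a_rev p (G, H)) $ i $ j * flip p w $ j = (H $ p $ j - 2 * G $ p $ j) * w $ j" for j
    using assms(2,3) by (auto simp: a_rev_def flip_def)
  then have "row i (snd (a_rev p (G, H))) \<bullet> flip p w = (\<Sum>j\<in>UNIV. (H $ p $ j - 2 * G $ p $ j) * w $ j)"
    by (simp add: inner_row)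
  also have "\<dots> = row p H \<bullet> w - 2 * (G *v w) $ p"
    by (simp add: inner_row matrix_vector_mult_component left_diff_distrib sum_subtractf
        sum_distrib_left mult.assoc)
  finally show ?thesis using True assms(1) by simp
next
  case False
  then have "snd (a_rev p (G, H)) $ i $ j * flip p w $ j = H $ i $ j * w $ j" for j
    by (auto simp: a_rev_def flip_def)
  then show ?thesis by (simp add: inner_row)
qed

lemma admissible_a_rev:
  assumes adm: "admissible G H w"
  shows "admissible (fst (a_rev p (G, H))) (snd (a_rev p (G, H))) (flip p w)"
proof -
  let ?G = "fst (a_rev p (G, H))" and ?H = "snd (a_rev p (G, H))"
  have sym: "transpose G = G" and diag: "\<And>i. G $ i $ i = 1" "\<And>i. H $ i $ i = 1"
    and "G *v w = 0" and ker: "\<And>c. G *v c = 0 \<Longrightarrow> \<exists>s. c = s *\<^sub>R w"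
    using adm by (auto simp: admissible_def inW_def)
  have kernel: "?G *v x = 0 \<longleftrightarrow> G *v flip p x = 0" for x
    using flip_eq_0_iff[of p "G *v flip p x"] by (simp add: a_rev_fst_mult)
  show ?thesis
    unfolding admissible_def inW_def
  proof (intro conjI allI impI)
    have "?G $ j $ i = ?G $ i $ j" for i j
      using symmetric_matrix_entry[OF sym, of j i] by (simp add: a_rev_fst_entry)
    then show "transpose ?G = ?G" by (simp add: vec_eq_iff transpose_def)
    show "?G $ i $ i = 1" "?H $ i $ i = 1" for i
      using diag by (simp_all add: a_rev_fst_entry a_rev_def)
    show "0 \<le> x \<bullet> (?G *v x)" for x
      using adm by (simp add: admissible_def a_rev_fst_quadratic_form)
    show "?G *v flip p w = 0" using kernel \<open>G *v w = 0\<close> by simp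
    show "flip p w $ i \<noteq> 0" for i using adm by (simp add: admissible_def flip_def)
    show "row i ?H \<bullet> flip p w \<noteq> 0" for i
      using adm a_rev_snd_row[OF \<open>G *v w = 0\<close> diag] by (simp add: admissible_def)
    show "\<exists>s. c = s *\<^sub>R flip p w" if "?G *v c = 0" for c
    proof -
      have "G *v flip p c = 0" using that kernel by blast
      then obtain s where "flip p c = s *\<^sub>R w" using ker by blast
      then have "c = s *\<^sub>R flip p w" by (metis flip_flip flip_scaleR)
      then show ?thesis ..
    qed
  qed
qed

lemma b_rev_eq: "b_rev p (G, H) = (G, snd (b_rev p (G, H)))"
  by (simp add: b_rev_def)

lemma b_rev_snd_row:
  assumes "G *v w = 0" "G $ p $ p = 1" "H $ p $ p = 1"
  shows "row i (snd (b_rev p (G, H))) \<bullet> w = (if i = p then - (row i H \<bullet> w) else row i H \<bullet> w)"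
proof (cases "i = p")
  case True
  then have "snd (b_rev p (G, H)) $ i $ j = 2 * G $ p $ j - H $ p $ j" for j
    using assms(2,3) by (auto simp: b_rev_def)
  then have "row i (snd (b_rev p (G, H))) \<bullet> w = (\<Sum>j\<in>UNIV. (2 * G $ p $ j - H $ p $ j) * w $ j)"
    by (simp add: inner_row)
  also have "\<dots> = 2 * (G *v w) $ p - row p H \<bullet> w"
    by (simp add: inner_row matrix_vector_mult_component left_diff_distrib sum_subtractf
        sum_distrib_left mult.assoc)
  finally show ?thesis using True assms(1) by simp
next
  case False
  then show ?thesis by (simp add: inner_row b_rev_def)
qed

lemma admissible_b_rev:
  assumes adm: "admissible G H w"
  shows "admissible G (snd (b_rev p (G, H))) w"
proof -
  have "G *v w = 0" "G $ p $ p = 1" "H $ p $ p = 1" using adm by (auto simp: admissible_def inW_def)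
  then have "row i (snd (b_rev p (G, H))) \<bullet> w \<noteq> 0" for i
    using adm b_rev_snd_row[of G w p H i] by (auto simp: admissible_def)
  moreover have "snd (b_rev p (G, H)) $ i $ i = 1" for i
    using adm by (auto simp: admissible_def inW_def b_rev_def)
  ultimately show ?thesis using adm by (auto simp: admissible_def inW_def)
qed

lemma Psi_admissible:
  assumes "x \<in> Psi" "2 \<le> CARD('n::finite)"
  shows "\<exists>w. admissible (fst x) (snd x :: real^'n^'n) w"
  using assms(1)
proof induction
  case (butterfly_pair a b)
  then show ?case using butterfly_admissible[OF _ assms(2)] by (auto simp: pair_of_def)
next
  case (a_reversion x p)
  then show ?case using admissible_a_rev[of "fst x" "snd x" _ p] by auto
next
  case (b_reversion x p)
  then show ?case using admissible_b_rev[of "fst x" "snd x" _ p] b_rev_eq[of p "fst x" "snd x"]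
    by (metis fst_conv prod.collapse)
qed

lemma a_rev_involution: "a_rev p (a_rev p x) = x"
  by (cases x) (auto simp: a_rev_def vec_eq_iff)

lemma b_rev_involution: "b_rev p (b_rev p x) = x"
  by (cases x) (auto simp: b_rev_def vec_eq_iff)

lemma Psi_a_rev_iff: "a_rev p x \<in> Psi \<longleftrightarrow> x \<in> Psi"
  using Psi.a_reversion a_rev_involution by metis

lemma Psi_b_rev_iff: "b_rev p x \<in> Psi \<longleftrightarrow> x \<in> Psi"
  using Psi.b_reversion b_rev_involution by metis

lemma admissible_pad_submatrix_pos_definite:
  assumes adm: "admissible G H w" and "r \<notin> S" "x \<noteq> 0"
  shows "0 < x \<bullet> (pad_submatrix G S *v x)"
proof (rule ccontr)
  let ?y = "restrict_vec S x" and ?rest = "\<Sum>i\<in>UNIV. if i \<notin> S then (x $ i)\<^sup>2 else 0"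
  have sym: "transpose G = G" and psd: "\<And>y. 0 \<le> y \<bullet> (G *v y)"
    and ker: "\<And>c. G *v c = 0 \<Longrightarrow> \<exists>s. c = s *\<^sub>R w" and "w $ r \<noteq> 0"
    using adm by (auto simp: admissible_def inW_def)
  assume "\<not> 0 < x \<bullet> (pad_submatrix G S *v x)"
  moreover have "0 \<le> ?rest" by (intro sum_nonneg) auto
  ultimately have "?y \<bullet> (G *v ?y) = 0" and rest: "?rest = 0"
    using psd[of ?y] unfolding pad_submatrix_quadratic_form by linarith+
  then obtain s where s: "?y = s *\<^sub>R w" using ker psd_isotropic_imp_kernel[OF sym psd] by blast
  have "?y $ r = 0" using \<open>r \<notin> S\<close> by (simp add: restrict_vec_def)
  then have "?y = 0" using s \<open>w $ r \<noteq> 0\<close> by simp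
  moreover have "x $ i = 0" if "i \<notin> S" for i
  proof -
    have "(if i \<notin> S then (x $ i)\<^sup>2 else 0) = 0"
      using rest sum_nonneg_eq_0_iff[of UNIV "\<lambda>i. if i \<notin> S then (x $ i)\<^sup>2 else 0"] by simp
    with that show ?thesis by simp
  qed
  ultimately have "x = 0" by (auto simp: vec_eq_iff restrict_vec_def split: if_splits)
  with \<open>x \<noteq> 0\<close> show False ..
qed

lemma admissible_principal_minor_pos:
  assumes "admissible G H w" "card S < CARD('n::finite)"
  shows "principal_minor G (S :: 'n set) > 0"
proof -
  obtain r where "r \<notin> S" using assms(2) by (metis UNIV_I card_mono finite leD subsetI)
  then have "det (pad_submatrix G S) > 0"
    by (intro pos_definite_det_pos admissible_pad_submatrix_pos_definite[OF assms(1)])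
  then show ?thesis by (simp add: det_pad_submatrix)
qed

lemma admissible_degenerate_psd: "admissible G H w \<Longrightarrow> degenerate_psd G"
  unfolding admissible_def degenerate_psd_def
  by (metis det_eq_0_iff_kernel vec_eq_iff zero_index)

lemma admissible_row_notin_span_rows:
  assumes "admissible G H w"
  shows "row p H \<notin> span (rows G)"
  using assms span_rows_iff_orthogonal_kernel[of G w]
  by (auto simp: admissible_def vec_eq_iff)

lemma pad_submatrix_singleton: "G $ s $ s = 1 \<Longrightarrow> pad_submatrix G {s} = mat 1"
  by (auto simp: pad_submatrix_def mat_def vec_eq_iff)

lemma kernel_vanishing_at_eq_0:
  assumes "det (pad_submatrix G (UNIV - {r})) \<noteq> 0" "G *v x = 0" "x $ r = 0"
  shows "x = 0"
proof -
  have x: "restrict_vec (UNIV - {r}) x = x" using assms(3) by (auto simp: restrict_vec_def vec_eq_iff)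
  have "pad_submatrix G (UNIV - {r}) *v x = 0"
    unfolding vec_eq_iff pad_submatrix_mult x using assms(2,3) by auto
  then show ?thesis using assms(1) det_eq_0_iff_kernel by blast
qed

lemma kernel_line:
  fixes G :: "real^'n::finite^'n"
  assumes "det G = 0" and minors: "\<And>r. det (pad_submatrix G (UNIV - {r})) \<noteq> 0"
  obtains c where "G *v c = 0" "\<And>i. c $ i \<noteq> 0" "\<And>x. G *v x = 0 \<Longrightarrow> \<exists>s. x = s *\<^sub>R c"
proof -
  obtain c where "c \<noteq> 0" and c: "G *v c = 0" using assms(1) det_eq_0_iff_kernel by blast
  have nz: "c $ i \<noteq> 0" for i using kernel_vanishing_at_eq_0[OF minors c] \<open>c \<noteq> 0\<close> by blast
  have "\<exists>s. x = s *\<^sub>R c" if "G *v x = 0" for x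
  proof
    fix r :: 'n
    let ?s = "x $ r / c $ r"
    have "G *v (x - ?s *\<^sub>R c) = 0"
      using that c by (simp add: matrix_vector_mult_diff_distrib matrix_vector_mult_scaleR)
    moreover have "(x - ?s *\<^sub>R c) $ r = 0" using nz[of r] by simp
    ultimately have "x - ?s *\<^sub>R c = 0" by (rule kernel_vanishing_at_eq_0[OF minors])
    then show "x = ?s *\<^sub>R c" by simp
  qed
  with c nz show thesis using that by blast
qed

lemma conditions_admissible:
  fixes G H :: "real^'n::finite^'n"
  assumes "2 \<le> CARD('n)" "inW G H" "degenerate_psd G"
    and minors: "\<And>S. 2 \<le> card S \<Longrightarrow> card S \<le> CARD('n) - 1 \<Longrightarrow> principal_minor G S > 0"
    and rows: "\<And>p. row p H \<notin> span (rows G)"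
  obtains w where "admissible G H w"
proof -
  have "det (pad_submatrix G (UNIV - {r})) \<noteq> 0" for r
  proof (cases "CARD('n) = 2")
    case True
    then obtain s where "UNIV - {r} = {s}"
      using card_1_singleton_iff[of "UNIV - {r}"] by (auto simp: card_Diff_singleton)
    then show ?thesis using assms(2) by (simp add: inW_def pad_submatrix_singleton det_I)
  next
    case False
    then have "2 \<le> card (UNIV - {r})" using assms(1) by (simp add: card_Diff_singleton)
    then show ?thesis using minors[of "UNIV - {r}"] by (simp add: det_pad_submatrix card_Diff_singleton)
  qed
  then obtain c where c: "G *v c = 0" "\<And>i. c $ i \<noteq> 0" "\<And>x. G *v x = 0 \<Longrightarrow> \<exists>s. x = s *\<^sub>R c"
    using kernel_line assms(3) unfolding degenerate_psd_def by blast
  have "c \<noteq> 0" using c(2) by (auto simp: vec_eq_iff)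
  then have "row p H \<bullet> c \<noteq> 0" for p using rows span_rows_iff_orthogonal_kernel[OF c(1) _ c(3)] by blast
  then have "admissible G H c" using assms(2,3) c by (auto simp: admissible_def degenerate_psd_def)
  then show thesis by (rule that)
qed

section \<open>Realisation by butterflies\<close>

lemma inner_system_solvable_constant_relations:
  fixes m :: "'n::finite \<Rightarrow> 'a::euclidean_space"
  assumes rel: "\<And>c j k. (\<Sum>q\<in>UNIV. c q *\<^sub>R m q) = 0 \<Longrightarrow> c j = c k" and "sum g UNIV = 0"
  obtains x where "x \<in> span (range m)" "\<And>q. m q \<bullet> x = g q"
proof -
  have "\<exists>x\<in>span (m ` UNIV). \<forall>q\<in>UNIV. m q \<bullet> x = g q"
  proof (rule inner_system_solvable)
    fix c assume "(\<Sum>q\<in>UNIV. c q *\<^sub>R m q) = 0"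
    then have const: "c q = c k" for q k by (rule rel)
    fix k
    have "(\<Sum>q\<in>UNIV. c q * g q) = (\<Sum>q\<in>UNIV. c k * g q)"
      by (intro sum.cong refl) (metis const)
    then have "(\<Sum>q\<in>UNIV. c q * g q) = c k * sum g UNIV" by (simp add: sum_distrib_left)
    then show "(\<Sum>q\<in>UNIV. c q * g q) = 0" using assms(2) by simp
  qed
  then show thesis using that by blast
qed

text \<open>The vertices are prescribed through their barycentric coordinates; the shift by
  \<open>1/n\<close> makes the prescribed pairings with the \<open>m\<^sub>q\<close> sum to zero, as solvability requires.\<close>

lemma simplex_with_scaled_normals:
  fixes m :: "'n::finite \<Rightarrow> real^'n"
  assumes "2 \<le> CARD('n)" and msum: "(\<Sum>q\<in>UNIV. m q) = 0"
    and rel: "\<And>c j k. (\<Sum>q\<in>UNIV. c q *\<^sub>R m q) = 0 \<Longrightarrow> c j = c k"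
  obtains a where "nondeg_simplex a" "\<And>q. scaled_normal a q = m q"
proof -
  define n where "n = real CARD('n)"
  have "n > 0" by (simp add: n_def)
  have "\<exists>x. x \<in> span (range m) \<and> (\<forall>q. m q \<bullet> x = (if q = j then 1 else 0) - 1 / n)" for j
  proof -
    have "sum (\<lambda>q. (if q = j then 1 else 0) - 1 / n) UNIV = 0"
      using \<open>n > 0\<close> by (simp add: sum_subtractf n_def)
    from inner_system_solvable_constant_relations[OF rel this] show ?thesis by blast
  qed
  then obtain a where a: "\<And>j. a j \<in> span (range m)"
    and am: "\<And>j q. m q \<bullet> a j = (if q = j then 1 else 0) - 1 / n"
    by metis
  have "nondeg_simplex a"
  proof (rule nondeg_simplexI)
    fix c assume c: "sum c UNIV = 0" "(\<Sum>j\<in>UNIV. c j *\<^sub>R a j) = 0"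
    have "m q \<bullet> (\<Sum>j\<in>UNIV. c j *\<^sub>R a j) = c q - sum c UNIV / n" for q
      by (simp add: am inner_sum_right right_diff_distrib sum_subtractf sum_divide_distrib[symmetric]
          if_distrib[of "(*) _"] cong: if_cong)
    then show "\<forall>j. c j = 0" using c by simp
  qed
  then interpret euclidean_simplex a using assms(1) by unfold_locales
  have "u q = m q" for q
  proof (rule scaled_normal_eqI[OF msum])
    show "a j - a k \<in> span (range m)" for j k using a by (intro span_diff)
    show "m q \<bullet> (a j - a k) = (if q = j then 1 else 0) - (if q = k then 1 else 0)" for q j k
      by (simp add: inner_diff_right am)
  qed
  with \<open>nondeg_simplex a\<close> show thesis by (rule that)
qed

lemma gram_kernel_relations:
  fixes G :: "real^'n::finite^'n" and n :: "'n \<Rightarrow> 'a::real_inner"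
  assumes gram: "\<And>i j. G $ i $ j = n i \<bullet> n j" and "G *v w = 0"
    and ker: "\<And>c. G *v c = 0 \<Longrightarrow> \<exists>s. c = s *\<^sub>R w" and w_nz: "\<And>i. w $ i \<noteq> 0"
  shows "(\<Sum>q\<in>UNIV. w $ q *\<^sub>R n q) = 0"
    and "(\<Sum>q\<in>UNIV. c q *\<^sub>R w $ q *\<^sub>R n q) = 0 \<Longrightarrow> c j = c k"
proof -
  show "(\<Sum>q\<in>UNIV. w $ q *\<^sub>R n q) = 0"
    using gram_quadratic_form[OF gram, of w] \<open>G *v w = 0\<close> by simp
next
  define x :: "real^'n" where "x = (\<chi> q. c q * w $ q)"
  assume "(\<Sum>q\<in>UNIV. c q *\<^sub>R w $ q *\<^sub>R n q) = 0"
  then have "(\<Sum>j\<in>UNIV. x $ j *\<^sub>R n j) = 0" by (simp add: x_def)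
  then have "(G *v x) $ i = 0" for i by (simp add: gram_matrix_vector_mult[OF gram])
  then obtain s where "x = s *\<^sub>R w" using ker by (simp add: vec_eq_iff) blast
  then have "c i * w $ i = s * w $ i" for i by (simp add: x_def vec_eq_iff)
  then have "c i = s" for i using w_nz[of i] by (metis mult_right_cancel)
  then show "c j = c k" by simp
qed

lemma admissible_simplex:
  fixes G H :: "real^'n::finite^'n"
  assumes "2 \<le> CARD('n)" and adm: "admissible G H w" and w_pos: "\<And>i. w $ i > 0"
  obtains a where "euclidean_simplex a" "gram_of a = G" "euclidean_simplex.inv_altitudes a = w"
proof -
  have sym: "transpose G = G" and diag: "\<And>i. G $ i $ i = 1" and psd: "\<And>x. 0 \<le> x \<bullet> (G *v x)"
    and kernel: "G *v w = 0" "\<And>c. G *v c = 0 \<Longrightarrow> \<exists>s. c = s *\<^sub>R w" "\<And>i. w $ i \<noteq> 0"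
    using adm by (auto simp: admissible_def inW_def)
  obtain n :: "'n \<Rightarrow> real^'n" where gram: "\<And>i j. G $ i $ j = n i \<bullet> n j"
    using psd_matrix_gram[OF sym psd] by blast
  have norm_n: "norm (n i) = 1" for i using diag[of i] gram[of i i] by (simp add: norm_eq_sqrt_inner)
  obtain a where "nondeg_simplex a" and u_m: "\<And>q. scaled_normal a q = w $ q *\<^sub>R n q"
    using simplex_with_scaled_normals[OF assms(1) gram_kernel_relations[OF gram kernel]] by blast
  then interpret euclidean_simplex a using assms(1) by unfold_locales
  have inv_alpha: "inverse (\<alpha> q) = w $ q" for q
  proof -
    have "norm (u q) = inverse (\<alpha> q)"
      using altitude_pos[of q] by (simp add: scaled_normal_eq norm_inner_normal)
    then show ?thesis using u_m[of q] w_pos[of q] norm_n[of q] by simp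
  qed
  have N_n: "N q = n q" for q
  proof -
    have "N q = \<alpha> q *\<^sub>R u q" using altitude_pos[of q] by (simp add: scaled_normal_eq)
    also have "\<dots> = (\<alpha> q * w $ q) *\<^sub>R n q" by (simp add: u_m)
    finally show ?thesis using altitude_pos[of q] by (simp add: inv_alpha[symmetric])
  qed
  have "gram_of a = G" by (simp add: gram_of_def vec_eq_iff gram N_n)
  moreover have "inv_altitudes = w" by (simp add: inv_altitudes_def vec_eq_iff inv_alpha)
  ultimately show thesis using that euclidean_simplex_axioms by blast
qed

text \<open>Any \<open>H\<close> with unit diagonal whose rows pair positively with the kernel vector is realised
  by wings lying in the hyperplane of \<open>\<Delta>\<close>: \<open>b\<^sub>p\<close> is the point whose barycentric coordinates are
  proportional to \<open>H\<^sub>p\<^sub>q / \<alpha>\<^sub>q\<close>.\<close>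

lemma (in euclidean_simplex) flat_wings:
  assumes diag: "\<And>p. H $ p $ p = 1" and pos: "\<And>p. row p H \<bullet> inv_altitudes > 0"
  obtains b where "\<And>p. nondeg_simplex (a(p := b p))" "hmat_of a b = H"
proof -
  define \<rho> where "\<rho> p = row p H \<bullet> inv_altitudes" for p
  define l where "l p j = H $ p $ j * inverse (\<alpha> j) / \<rho> p" for p j
  define b where "b p = (\<Sum>j\<in>UNIV. l p j *\<^sub>R a j)" for p
  have "\<rho> p > 0" for p using pos by (simp add: \<rho>_def)
  have sum_l: "sum (l p) UNIV = 1" for p
    using \<open>\<rho> p > 0\<close> by (simp add: l_def \<rho>_def inner_row inv_altitudes_def sum_divide_distrib[symmetric])
  have normal_coord: "(b p - a r) \<bullet> N q = H $ p $ q / \<rho> p" if "r \<noteq> q" for p q r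
  proof -
    have "inverse (\<alpha> q) * ((b p - a r) \<bullet> N q) = l p q"
      using scaled_normal_affine_combination[OF sum_l, of q p r] that
      by (simp add: b_def scaled_normal_eq inner_commute)
    then show ?thesis using altitude_pos[of q] by (simp add: l_def field_simps)
  qed
  have foot_b: "foot a p (b p) = b p - inverse (\<rho> p) *\<^sub>R N p" for p
  proof -
    have "b p - a p \<in> D" unfolding b_def by (rule affine_combination_diff_in_D[OF sum_l])
    then show ?thesis
      using normal_coord[OF other_ne, of p p] diag[of p] by (simp add: foot_eq divide_inverse)
  qed
  have beta_b: "beta a b p = inverse (\<rho> p)" for p
    using \<open>\<rho> p > 0\<close> by (simp add: beta_def foot_b dist_norm norm_inner_normal)
  have "b_rot a b p = b p" for p by (simp add: b_rot_def beta_b foot_b)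
  then have "hmat_of a b $ p $ q = H $ p $ q" for p q
    using normal_coord[OF other_ne, of p q] \<open>\<rho> p > 0\<close>
    by (simp add: hmat_of_def beta_b other_def)
  then have "hmat_of a b = H" by (simp add: vec_eq_iff)
  moreover have "nondeg_simplex (a(p := b p))" for p
  proof (rule nondeg_simplex_replace_vertex)
    have "u p \<bullet> (b p - a (other p)) = l p p"
      using scaled_normal_affine_combination[OF sum_l, of p p "other p"] other_ne[of p]
      by (simp add: b_def)
    then show "u p \<bullet> (b p - a (other p)) \<noteq> 0"
      using diag[of p] altitude_pos[of p] \<open>\<rho> p > 0\<close> by (simp add: l_def)
  qed
  ultimately show thesis using that by blast
qed

lemma admissible_positive_Psi:
  fixes G H :: "real^'n::finite^'n"
  assumes "2 \<le> CARD('n)" "admissible G H w" "\<And>i. w $ i > 0" "\<And>p. row p H \<bullet> w > 0"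
  shows "(G, H) \<in> Psi"
proof -
  obtain a where "euclidean_simplex a" "gram_of a = G" "euclidean_simplex.inv_altitudes a = w"
    using admissible_simplex[OF assms(1-3)] .
  then interpret euclidean_simplex a by simp
  have "H $ p $ p = 1" for p using assms(2) by (simp add: admissible_def inW_def)
  then obtain b where "\<And>p. nondeg_simplex (a(p := b p))" "hmat_of a b = H"
    using flat_wings assms(4) \<open>inv_altitudes = w\<close> by metis
  then have "butterfly a b" "pair_of a b = (G, H)"
    using nondeg \<open>gram_of a = G\<close> by (auto simp: butterfly_def pair_of_def)
  then show ?thesis by (metis Psi.butterfly_pair)
qed

definition sign_defects :: "real^'n::finite^'n \<Rightarrow> real^'n \<Rightarrow> nat" where
  "sign_defects H w = card {i. w $ i < 0} + card {p. row p H \<bullet> w < 0}"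

lemma sign_defects_a_rev:
  assumes "admissible G H w" "w $ p < 0"
  shows "sign_defects (snd (a_rev p (G, H))) (flip p w) < sign_defects H w"
proof -
  have "{i. flip p w $ i < 0} = {i. w $ i < 0} - {p}" using assms(2) by (auto simp: flip_def)
  then have "card {i. flip p w $ i < 0} < card {i. w $ i < 0}"
    using assms(2) by (metis card_Diff1_less finite mem_Collect_eq)
  moreover have "row q (snd (a_rev p (G, H))) \<bullet> flip p w = row q H \<bullet> w" for q
    using assms(1) by (intro a_rev_snd_row) (auto simp: admissible_def inW_def)
  ultimately show ?thesis by (simp add: sign_defects_def)
qed

lemma sign_defects_b_rev:
  assumes "admissible G H w" "row p H \<bullet> w < 0"
  shows "sign_defects (snd (b_rev p (G, H))) w < sign_defects H w"
proof -
  let ?H = "snd (b_rev p (G, H))"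
  have "row q ?H \<bullet> w = (if q = p then - (row q H \<bullet> w) else row q H \<bullet> w)" for q
    using assms(1) by (intro b_rev_snd_row) (auto simp: admissible_def inW_def)
  then have "{q. row q ?H \<bullet> w < 0} = {q. row q H \<bullet> w < 0} - {p}"
    using assms(2) by (auto split: if_splits)
  then have "card {q. row q ?H \<bullet> w < 0} < card {q. row q H \<bullet> w < 0}"
    using assms(2) by (metis card_Diff1_less finite mem_Collect_eq)
  then show ?thesis by (simp add: sign_defects_def)
qed

lemma admissible_Psi:
  fixes G H :: "real^'n::finite^'n"
  assumes "2 \<le> CARD('n)" "admissible G H w"
  shows "(G, H) \<in> Psi"
  using assms(2)
proof (induction "sign_defects H w" arbitrary: G H w rule: less_induct)
  case less
  show ?case
  proof (cases "\<exists>p. w $ p < 0 \<or> row p H \<bullet> w < 0")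
    case True
    then obtain p where "w $ p < 0 \<or> row p H \<bullet> w < 0" by blast
    then show ?thesis
    proof
      assume "w $ p < 0"
      then have "(fst (a_rev p (G, H)), snd (a_rev p (G, H))) \<in> Psi"
        using less.hyps[OF sign_defects_a_rev admissible_a_rev] less.prems by blast
      then show ?thesis by (simp add: Psi_a_rev_iff)
    next
      assume "row p H \<bullet> w < 0"
      then have "(G, snd (b_rev p (G, H))) \<in> Psi"
        using less.hyps[OF sign_defects_b_rev admissible_b_rev] less.prems by blast
      then show ?thesis by (metis b_rev_eq Psi_b_rev_iff)
    qed
  next
    case False
    have "w $ i \<noteq> 0" "row p H \<bullet> w \<noteq> 0" for i p using less.prems by (auto simp: admissible_def)
    then have "w $ i > 0" "row p H \<bullet> w > 0" for i p
      using False by (meson linorder_neqE_linordered_idom)+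
    then show ?thesis using admissible_positive_Psi[OF assms(1) less.prems] by blast
  qed
qed

lemma Psi_iff_conditions:
  fixes G H :: "real^'n::finite^'n"
  assumes "2 \<le> CARD('n)" "inW G H"
  shows "(G, H) \<in> Psi \<longleftrightarrow>
    (degenerate_psd G \<and> (\<forall>S. 2 \<le> card S \<and> card S \<le> CARD('n) - 1 \<longrightarrow> principal_minor G S > 0)) \<and>
    (\<forall>p. row p H \<notin> span (rows G))" (is "_ \<longleftrightarrow> ?conditions")
proof
  assume "(G, H) \<in> Psi"
  then obtain w where adm: "admissible G H w" using Psi_admissible[OF _ assms(1)] by fastforce
  have "card S < CARD('n)" if "card S \<le> CARD('n) - 1" for S :: "'n set" using that assms(1) by linarith
  then show ?conditions
    using admissible_degenerate_psd[OF adm] admissible_principal_minor_pos[OF adm]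
      admissible_row_notin_span_rows[OF adm] by blast
next
  assume ?conditions
  then obtain w where "admissible G H w" using conditions_admissible[OF assms] by blast
  then show "(G, H) \<in> Psi" by (rule admissible_Psi[OF assms(1)])
qed

section \<open>Uniqueness up to similarity\<close>

lemma inner_sum_scaleR_sum_scaleR:
  fixes v :: "'i \<Rightarrow> 'a::real_inner"
  shows "(\<Sum>q\<in>S. m q *\<^sub>R v q) \<bullet> (\<Sum>l\<in>S. m l *\<^sub>R v l) = (\<Sum>q\<in>S. \<Sum>l\<in>S. m q * m l * (v q \<bullet> v l))"
  by (simp add: inner_sum_left inner_sum_right sum_distrib_left mult_ac)
     (auto intro!: sum.cong simp: inner_commute)

lemma gram_of_eq_inv_altitudes_scaled:
  assumes A: "euclidean_simplex a" and A': "euclidean_simplex a'" and G: "gram_of a = gram_of a'"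
  obtains t where "t > 0"
    "euclidean_simplex.inv_altitudes a' = t *\<^sub>R euclidean_simplex.inv_altitudes a"
proof -
  interpret A: euclidean_simplex a by (rule A)
  interpret A': euclidean_simplex a' by (rule A')
  have "gram_of a *v A'.inv_altitudes = 0" using A'.gram_of_inv_altitudes G by simp
  then obtain t where t: "A'.inv_altitudes = t *\<^sub>R A.inv_altitudes" using A.gram_of_kernel by blast
  fix q
  have "t > 0"
    using A'.inv_altitudes_pos[of q] A.inv_altitudes_pos[of q] t by (simp add: zero_less_mult_iff)
  from this t show thesis by (rule that)
qed

text \<open>Equal Gram matrices make the Gram matrices of the scaled normals proportional (factor
  \<open>t\<^sup>2\<close>), and a vector of the hyperplane is determined by its pairings with the scaled normals.\<close>

lemma norm_eq_if_scaled_normal_coordinates_eq: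
  assumes A: "euclidean_simplex a" and A': "euclidean_simplex a'" and G: "gram_of a = gram_of a'"
    and "t > 0" and t: "euclidean_simplex.inv_altitudes a' = t *\<^sub>R euclidean_simplex.inv_altitudes a"
    and z: "z \<in> span (range (scaled_normal a))" and z': "z' \<in> span (range (scaled_normal a'))"
    and coord: "\<And>k. scaled_normal a' k \<bullet> z' = scaled_normal a k \<bullet> z"
  shows "norm z' = norm z / t"
proof -
  interpret A: euclidean_simplex a by (rule A)
  interpret A': euclidean_simplex a' by (rule A')
  have uu: "A'.u q \<bullet> A'.u l = t\<^sup>2 * (A.u q \<bullet> A.u l)" for q l
    using t G by (simp add: A.scaled_normal_eq A'.scaled_normal_eq A.gram_of_entry[symmetric]
        A'.gram_of_entry[symmetric] vec_eq_iff A.inv_altitudes_def A'.inv_altitudes_def power2_eq_square)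
  obtain m where m: "z = (\<Sum>q\<in>UNIV. m q *\<^sub>R A.u q)" using in_span_imageE[OF z finite] .
  define y where "y = (\<Sum>q\<in>UNIV. (m q / t\<^sup>2) *\<^sub>R A'.u q)"
  have "z' - y = 0"
  proof (rule A'.D_orthogonal_eq_0)
    have "y \<in> A'.D" unfolding y_def by (intro span_sum span_scale span_base) auto
    then show "z' - y \<in> A'.D" using z' by (intro span_diff)
    fix k
    have "A'.u k \<bullet> y = A.u k \<bullet> z"
      using \<open>t > 0\<close> by (simp add: y_def m inner_sum_right uu)
    then show "A'.u k \<bullet> (z' - y) = 0" by (simp add: inner_diff_right coord)
  qed
  then have "z' \<bullet> z' = (\<Sum>q\<in>UNIV. \<Sum>l\<in>UNIV. (m q / t\<^sup>2) * (m l / t\<^sup>2) * (A'.u q \<bullet> A'.u l))"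
    by (simp add: y_def inner_sum_scaleR_sum_scaleR)
  also have "\<dots> = (\<Sum>q\<in>UNIV. \<Sum>l\<in>UNIV. m q * m l * (A.u q \<bullet> A.u l)) / t\<^sup>2"
    using \<open>t > 0\<close> by (simp add: uu sum_divide_distrib power2_eq_square mult.assoc)
  also have "\<dots> = (z \<bullet> z) / t\<^sup>2" by (simp add: m inner_sum_scaleR_sum_scaleR)
  finally show ?thesis using \<open>t > 0\<close> by (simp add: norm_eq_sqrt_inner real_sqrt_divide)
qed

lemma butterfly_pair_eq_scaling:
  fixes a b a' b' :: "'n::finite \<Rightarrow> real^'n"
  assumes A: "euclidean_butterfly a b" and A': "euclidean_butterfly a' b'"
    and eq: "pair_of a b = pair_of a' b'"
  obtains t where "t > 0"
    "euclidean_simplex.inv_altitudes a' = t *\<^sub>R euclidean_simplex.inv_altitudes a"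
    "\<And>p. beta a' b' p = beta a b p / t"
proof -
  interpret A: euclidean_butterfly a b by (rule A)
  interpret A': euclidean_butterfly a' b' by (rule A')
  have H: "hmat_of a b = hmat_of a' b'" using eq by (simp add: pair_of_def)
  obtain t where "t > 0" and t: "A'.inv_altitudes = t *\<^sub>R A.inv_altitudes"
    using gram_of_eq_inv_altitudes_scaled[OF A.euclidean_simplex_axioms A'.euclidean_simplex_axioms]
      eq by (auto simp: pair_of_def)
  have "A'.\<beta> p = A.\<beta> p / t" for p
  proof -
    have "inverse (A'.\<beta> p) = row p (hmat_of a' b') \<bullet> A'.inv_altitudes"
      by (simp add: A'.row_hmat_of_inv_altitudes)
    also have "\<dots> = t * inverse (A.\<beta> p)" by (simp add: H[symmetric] t A.row_hmat_of_inv_altitudes)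
    finally show ?thesis using \<open>t > 0\<close> A.beta_pos[of p] A'.beta_pos[of p] by (simp add: field_simps)
  qed
  with \<open>t > 0\<close> t show thesis by (rule that)
qed

theorem butterfly_similar_if_pair_eq:
  fixes a b a' b' :: "'n::finite \<Rightarrow> real^'n"
  assumes "2 \<le> CARD('n)" "butterfly a b" "butterfly a' b'" and eq: "pair_of a b = pair_of a' b'"
  shows "butterfly_similar a b a' b'"
proof -
  interpret A: euclidean_butterfly a b by (rule euclidean_butterflyI[OF assms(2,1)])
  interpret A': euclidean_butterfly a' b' by (rule euclidean_butterflyI[OF assms(3,1)])
  have G: "gram_of a = gram_of a'" and H: "hmat_of a b = hmat_of a' b'"
    using eq by (auto simp: pair_of_def)
  obtain t where "t > 0" and t: "A'.inv_altitudes = t *\<^sub>R A.inv_altitudes"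
    and beta: "\<And>p. A'.\<beta> p = A.\<beta> p / t"
    using butterfly_pair_eq_scaling[OF A.euclidean_butterfly_axioms A'.euclidean_butterfly_axioms eq]
    by blast
  have alpha: "inverse (A'.\<alpha> k) = t * inverse (A.\<alpha> k)" for k
    using t by (simp add: vec_eq_iff A.inv_altitudes_def A'.inv_altitudes_def)
  note norm_eq = norm_eq_if_scaled_normal_coordinates_eq[OF A.euclidean_simplex_axioms
      A'.euclidean_simplex_axioms G \<open>t > 0\<close> t]
  show ?thesis unfolding butterfly_similar_def
  proof (intro exI[of _ "inverse t"] conjI allI impI)
    show "inverse t > 0" using \<open>t > 0\<close> by simp
    fix i j
    have "norm (a' i - a' j) = norm (a i - a j) / t"
      by (rule norm_eq[OF A.vertex_diff_in_D A'.vertex_diff_in_D])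
        (simp add: A.scaled_normal_vertex_diff A'.scaled_normal_vertex_diff)
    then show "dist (a' i) (a' j) = inverse t * dist (a i) (a j)"
      by (simp add: dist_norm divide_inverse_commute)
  next
    fix p q :: 'n assume "q \<noteq> p"
    have "norm (A'.b0 p - a' q) = norm (A.b0 p - a q) / t"
      using \<open>t > 0\<close>
      by (intro norm_eq[OF A.b_rot_diff_in_D A'.b_rot_diff_in_D])
        (simp add: A.scaled_normal_b_rot A'.scaled_normal_b_rot H alpha beta)
    then show "dist (b' p) (a' q) = inverse t * dist (b p) (a q)"
      using A.dist_wing_vertex[OF \<open>q \<noteq> p\<close>] A'.dist_wing_vertex[OF \<open>q \<noteq> p\<close>]
      by (simp add: divide_inverse_commute)
  qed
qed

theorem mainTheorem13:
  assumes "CARD('n::finite) \<ge> 2"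
  shows "(\<forall>G H :: real^'n^'n. inW G H \<longrightarrow>
            ((G, H) \<in> Psi \<longleftrightarrow>
               (degenerate_psd G \<and>
                (\<forall>S. 2 \<le> card S \<and> card S \<le> CARD('n) - 1 \<longrightarrow> principal_minor G S > 0)) \<and>
               (\<forall>p. row p H \<notin> span (rows G))))
       \<and> (\<forall>a b a' b' :: 'n \<Rightarrow> real^'n. butterfly a b \<longrightarrow> butterfly a' b' \<longrightarrow>
            pair_of a b = pair_of a' b' \<longrightarrow> butterfly_similar a b a' b')"
  using Psi_iff_conditions[OF assms] butterfly_similar_if_pair_eq[OF assms] by blast

end
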